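(* Let $P$ be a normal program and $S$ a set of queries. Then $P$ LDNF-terminates with respect to $S$ if and only if $M_4\cup\mathit{ce}(P)$ LDNF-terminates with respect to $\{\mathit{solve}(Q)\mid Q\in S\}$.
   Context: A normal program has clauses whose bodies are sequences of literals (atoms $A$ or negated atoms $\neg A$), with negation as finite failure. A query LDNF-terminates for a program if its LDNF-forest (SLDNF-resolution with the leftmost selection rule) is finite; a program LDNF-terminates w.r.t. a set of queries if it does so for every query in the set. Clause encoding: a body $L_1,\dots,L_n$ ($n\ge1$) is represented as the term $(L_1,(L_2,\dots,L_n))$ with a binary functor $,/2$, a negative literal $\neg A$ as the term $\neg A$, and an empty body by the constant $\mathit{true}$; $\mathit{ce}(P)$ is the set of facts $\mathit{clause}(H,B)$, one per clause $H\leftarrow B$ of $P$; the symbols $,/2$, $\mathit{clause}$, $\mathit{solve}$ do not occur in the language of $P$. A query $Q=L_1,\dots,L_n$ is encoded in $\mathit{solve}(Q)$ in the same way. $M_4$ is the program $\mathit{solve}(\mathit{true}).$ $\mathit{solve}((A,B))\leftarrow\mathit{solve}(A),\mathit{solve}(B).$ $\mathit{solve}(\neg A)\leftarrow\neg\mathit{solve}(A).$ $\mathit{solve}(H)\leftarrow\mathit{clause}(H,B),\mathit{solve}(B).$ *)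

theory Defs
  imports Main
begin

datatype 'f trm = Var nat | Fn 'f "'f trm list"

type_synonym 'f atom = "'f \<times> 'f trm list"

datatype 'f lit = Pos "'f atom" | Neg "'f atom"

type_synonym 'f clause = "'f atom \<times> 'f lit list"
type_synonym 'f query = "'f lit list"
type_synonym 'f subst = "nat \<Rightarrow> 'f trm"

fun tsubst :: "'f subst \<Rightarrow> 'f trm \<Rightarrow> 'f trm" where
  "tsubst \<sigma> (Var x) = \<sigma> x"
| "tsubst \<sigma> (Fn f ts) = Fn f (map (tsubst \<sigma>) ts)"

definition asubst :: "'f subst \<Rightarrow> 'f atom \<Rightarrow> 'f atom" where
  "asubst \<sigma> a = (fst a, map (tsubst \<sigma>) (snd a))"

fun lsubst :: "'f subst \<Rightarrow> 'f lit \<Rightarrow> 'f lit" where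
  "lsubst \<sigma> (Pos a) = Pos (asubst \<sigma> a)"
| "lsubst \<sigma> (Neg a) = Neg (asubst \<sigma> a)"

definition csubst :: "'f subst \<Rightarrow> 'f clause \<Rightarrow> 'f clause" where
  "csubst \<sigma> c = (asubst \<sigma> (fst c), map (lsubst \<sigma>) (snd c))"

fun tvars :: "'f trm \<Rightarrow> nat set" where
  "tvars (Var x) = {x}"
| "tvars (Fn f ts) = \<Union> (set (map tvars ts))"

definition avars :: "'f atom \<Rightarrow> nat set" where
  "avars a = \<Union> (set (map tvars (snd a)))"

fun lvars :: "'f lit \<Rightarrow> nat set" where
  "lvars (Pos a) = avars a"
| "lvars (Neg a) = avars a"

definition qvars :: "'f query \<Rightarrow> nat set" where
  "qvars Q = \<Union> (set (map lvars Q))"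

definition cvars :: "'f clause \<Rightarrow> nat set" where
  "cvars c = avars (fst c) \<union> qvars (snd c)"

definition ground_atom :: "'f atom \<Rightarrow> bool" where
  "ground_atom a \<longleftrightarrow> avars a = {}"

definition renaming :: "'f subst \<Rightarrow> bool" where
  "renaming \<rho> \<longleftrightarrow> (\<forall>x. \<exists>y. \<rho> x = Var y) \<and> inj \<rho>"

definition unifier :: "'f subst \<Rightarrow> 'f atom \<Rightarrow> 'f atom \<Rightarrow> bool" where
  "unifier \<theta> a b \<longleftrightarrow> asubst \<theta> a = asubst \<theta> b"

definition is_mgu :: "'f subst \<Rightarrow> 'f atom \<Rightarrow> 'f atom \<Rightarrow> bool" where
  "is_mgu \<theta> a b \<longleftrightarrow> unifier \<theta> a b \<and>
     (\<forall>\<sigma>. unifier \<sigma> a b \<longrightarrow> (\<exists>\<delta>. \<forall>x. \<sigma> x = tsubst \<delta> (\<theta> x)))"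

text \<open>ld_resolvent P Q Q': Q' is an LD-resolvent of Q (leftmost literal
 positive) with a variant of a clause of P renamed apart from Q, via an mgu.
 All variants and all mgus are admitted.\<close>
definition ld_resolvent :: "'f clause set \<Rightarrow> 'f query \<Rightarrow> 'f query \<Rightarrow> bool" where
  "ld_resolvent P Q Q' \<longleftrightarrow> (\<exists>A R. Q = Pos A # R \<and>
     (\<exists>c\<in>P. \<exists>\<rho> \<theta>. renaming \<rho> \<and> cvars (csubst \<rho> c) \<inter> qvars Q = {} \<and>
        is_mgu \<theta> A (fst (csubst \<rho> c)) \<and>
        Q' = map (lsubst \<theta>) (snd (csubst \<rho> c) @ R)))"

text \<open>Subsidiary trees are those with root the single atom A of a selected
 ground negative literal (non-ground ones flounder).\<close>
inductive ldnf_succeeds :: "'f clause set \<Rightarrow> 'f query \<Rightarrow> bool"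
  and ldnf_ffails :: "'f clause set \<Rightarrow> 'f query \<Rightarrow> bool"
  for P :: "'f clause set" where
  succ_nil: "ldnf_succeeds P []"
| succ_pos: "ld_resolvent P (Pos A # R) Q' \<Longrightarrow> ldnf_succeeds P Q' \<Longrightarrow>
     ldnf_succeeds P (Pos A # R)"
| succ_neg: "ground_atom A \<Longrightarrow> ldnf_ffails P [Pos A] \<Longrightarrow> ldnf_succeeds P R \<Longrightarrow>
     ldnf_succeeds P (Neg A # R)"
| ff_pos: "(\<forall>Q'. ld_resolvent P (Pos A # R) Q' \<longrightarrow> ldnf_ffails P Q') \<Longrightarrow>
     ldnf_ffails P (Pos A # R)"
| ff_neg_succ: "ground_atom A \<Longrightarrow> ldnf_succeeds P [Pos A] \<Longrightarrow>
     ldnf_ffails P (Neg A # R)"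
| ff_neg_ff: "ground_atom A \<Longrightarrow> ldnf_ffails P [Pos A] \<Longrightarrow> ldnf_ffails P R \<Longrightarrow>
     ldnf_ffails P (Neg A # R)"

text \<open>ldnf_terminates P Q: the LDNF-forest of Q (main tree and, recursively,
 all subsidiary trees) is finite. For finite P every node has finitely many
 children up to variants, so finiteness coincides with this well-foundedness
 formulation.\<close>
inductive ldnf_terminates :: "'f clause set \<Rightarrow> 'f query \<Rightarrow> bool"
  for P :: "'f clause set" where
  term_nil: "ldnf_terminates P []"
| term_pos: "(\<forall>Q'. ld_resolvent P (Pos A # R) Q' \<longrightarrow> ldnf_terminates P Q') \<Longrightarrow>
     ldnf_terminates P (Pos A # R)"
| term_flounder: "\<not> ground_atom A \<Longrightarrow> ldnf_terminates P (Neg A # R)"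
| term_neg: "ground_atom A \<Longrightarrow> ldnf_terminates P [Pos A] \<Longrightarrow>
     (ldnf_ffails P [Pos A] \<longrightarrow> ldnf_terminates P R) \<Longrightarrow>
     ldnf_terminates P (Neg A # R)"

definition ldnf_terminates_wrt :: "'f clause set \<Rightarrow> 'f query set \<Rightarrow> bool" where
  "ldnf_terminates_wrt P S \<longleftrightarrow> (\<forall>Q\<in>S. ldnf_terminates P Q)"

datatype 'f msym = Usr 'f | Comma | NegSym | TrueSym | Solve | ClauseSym

definition enc_atom :: "'f atom \<Rightarrow> 'f msym trm" where
  "enc_atom a = Fn (Usr (fst a)) (map (map_trm Usr) (snd a))"

fun enc_lit :: "'f lit \<Rightarrow> 'f msym trm" where
  "enc_lit (Pos a) = enc_atom a"
| "enc_lit (Neg a) = Fn NegSym [enc_atom a]"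

fun enc_body :: "'f lit list \<Rightarrow> 'f msym trm" where
  "enc_body [] = Fn TrueSym []"
| "enc_body [L] = enc_lit L"
| "enc_body (L # L' # Ls) = Fn Comma [enc_lit L, enc_body (L' # Ls)]"

definition M4 :: "'f msym clause set" where
  "M4 = {
     ((Solve, [Fn TrueSym []]), []),
     ((Solve, [Fn Comma [Var 0, Var 1]]), [Pos (Solve, [Var 0]), Pos (Solve, [Var 1])]),
     ((Solve, [Fn NegSym [Var 0]]), [Neg (Solve, [Var 0])]),
     ((Solve, [Var 0]), [Pos (ClauseSym, [Var 0, Var 1]), Pos (Solve, [Var 1])]) }"

definition ce :: "'f clause set \<Rightarrow> 'f msym clause set" where
  "ce P = (\<lambda>c. ((ClauseSym, [enc_atom (fst c), enc_body (snd c)]), [])) ` P"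

definition solve_query :: "'f query \<Rightarrow> 'f msym query" where
  "solve_query Q = [Pos (Solve, [enc_body Q])]"

end

theory Submission
  imports Defs
begin

text \<open>\<open>M4 \<union> ce P\<close> simulates LDNF-resolution for \<open>P\<close> step by step. Up to variants, the goal
  lists reachable from \<open>solve(Q)\<close> encode object queries; each of them either has no
  resolvents at all, or is about to unfold a conjunction, \<open>true\<close>, a negation or an atom
  (administrative steps, which cannot go on forever and keep the encoded query), or is about to
  resolve \<open>clause(A, b)\<close> against a clause fact, which is exactly an LD-resolution step of
  \<open>P\<close> on \<open>A\<close>, or is about to evaluate \<open>\<not>solve(A)\<close>, which mirrors the negation step.
  The delicate point is that the meta-level mgu of the encoded atoms is the encoding of the
  object-level mgu, which rests on a skolemization argument. Success, finite failure and
  termination are then transferred in both directions by induction on their derivations.\<close>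

section \<open>Substitutions\<close>

lemma tsubst_tsubst: "tsubst \<sigma> (tsubst \<tau> t) = tsubst (\<lambda>x. tsubst \<sigma> (\<tau> x)) t"
  by (induction t) auto

lemma tsubst_cong: "(\<And>x. x \<in> tvars t \<Longrightarrow> \<sigma> x = \<tau> x) \<Longrightarrow> tsubst \<sigma> t = tsubst \<tau> t"
  by (induction t) auto

lemma tsubst_Var [simp]: "tsubst Var = id"
proof
  show "tsubst Var t = id t" for t
    by (induction t) (auto simp: map_idI)
qed

lemma tsubst_id: "(\<And>x. x \<in> tvars t \<Longrightarrow> \<sigma> x = Var x) \<Longrightarrow> tsubst \<sigma> t = t"
  using tsubst_cong[of t \<sigma> Var] by simp

lemma tvars_tsubst: "tvars (tsubst \<sigma> t) = (\<Union>x\<in>tvars t. tvars (\<sigma> x))"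
  by (induction t) auto

lemma finite_tvars [simp]: "finite (tvars t)"
  by (induction t) auto

lemma tsubst_eq_Var: "tsubst \<delta> u = Var x \<Longrightarrow> \<exists>y. u = Var y \<and> \<delta> y = Var x"
  by (cases u) auto

lemma tsubst_fixpoint_Var: "tsubst \<delta> u = u \<Longrightarrow> x \<in> tvars u \<Longrightarrow> \<delta> x = Var x"
proof (induction u)
  case (Fn f ts)
  then obtain t where "t \<in> set ts" "x \<in> tvars t" by auto
  moreover from Fn.prems(1) have "\<forall>t\<in>set ts. tsubst \<delta> t = t"
    using map_eq_conv[of "tsubst \<delta>" ts id] by simp
  ultimately show ?case using Fn.IH by blast
qed simp

lemma asubst_asubst: "asubst \<sigma> (asubst \<tau> a) = asubst (\<lambda>x. tsubst \<sigma> (\<tau> x)) a"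
  by (simp add: asubst_def tsubst_tsubst)

lemma asubst_cong: "(\<And>x. x \<in> avars a \<Longrightarrow> \<sigma> x = \<tau> x) \<Longrightarrow> asubst \<sigma> a = asubst \<tau> a"
  by (auto simp: asubst_def avars_def intro!: tsubst_cong)

lemma avars_asubst: "avars (asubst \<sigma> a) = (\<Union>x\<in>avars a. tvars (\<sigma> x))"
  by (auto simp: asubst_def avars_def tvars_tsubst)

lemma fst_asubst [simp]: "fst (asubst \<sigma> a) = fst a"
  by (simp add: asubst_def)

lemma asubst_Pair: "asubst \<sigma> (p, ts) = (p, map (tsubst \<sigma>) ts)"
  by (simp add: asubst_def)

lemma avars_Pair: "avars (p, ts) = (\<Union>t\<in>set ts. tvars t)"
  by (simp add: avars_def)

lemma asubst_Var [simp]: "asubst Var a = a"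
  by (simp add: asubst_def)

lemma finite_avars [simp]: "finite (avars a)"
  by (simp add: avars_def)

lemma ground_asubst: "ground_atom A \<Longrightarrow> asubst \<sigma> A = A"
  using asubst_cong[of A \<sigma> Var] by (simp add: ground_atom_def)

lemma lsubst_lsubst: "lsubst \<sigma> (lsubst \<tau> l) = lsubst (\<lambda>x. tsubst \<sigma> (\<tau> x)) l"
  by (cases l) (auto simp: asubst_asubst)

lemma lsubst_cong: "(\<And>x. x \<in> lvars l \<Longrightarrow> \<sigma> x = \<tau> x) \<Longrightarrow> lsubst \<sigma> l = lsubst \<tau> l"
  by (cases l) (auto intro!: asubst_cong)

lemma lvars_lsubst: "lvars (lsubst \<sigma> l) = (\<Union>x\<in>lvars l. tvars (\<sigma> x))"
  by (cases l) (auto simp: avars_asubst)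

lemma lsubst_Var [simp]: "lsubst Var = id"
proof
  show "lsubst Var l = id l" for l
    by (cases l) auto
qed

lemma finite_lvars [simp]: "finite (lvars l)"
  by (cases l) auto

lemma qvars_simps [simp]:
  "qvars [] = {}" "qvars (l # Q) = lvars l \<union> qvars Q" "qvars (Q @ Q') = qvars Q \<union> qvars Q'"
  by (auto simp: qvars_def)

lemma finite_qvars [simp]: "finite (qvars Q)"
  by (simp add: qvars_def)

lemma qvars_map_lsubst: "qvars (map (lsubst \<sigma>) Q) = (\<Union>x\<in>qvars Q. tvars (\<sigma> x))"
  by (auto simp: qvars_def lvars_lsubst)

lemma map_lsubst_map_lsubst:
  "map (lsubst \<sigma>) (map (lsubst \<tau>) Q) = map (lsubst (\<lambda>x. tsubst \<sigma> (\<tau> x))) Q"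
  by (simp add: lsubst_lsubst)

lemma map_lsubst_cong:
  "(\<And>x. x \<in> qvars Q \<Longrightarrow> \<sigma> x = \<tau> x) \<Longrightarrow> map (lsubst \<sigma>) Q = map (lsubst \<tau>) Q"
  by (auto simp: qvars_def intro!: lsubst_cong)

lemma map_lsubst_id: "(\<And>x. x \<in> qvars Q \<Longrightarrow> \<sigma> x = Var x) \<Longrightarrow> map (lsubst \<sigma>) Q = Q"
  using map_lsubst_cong[of Q \<sigma> Var] by simp

lemma cvars_csubst: "cvars (csubst \<sigma> c) = (\<Union>x\<in>cvars c. tvars (\<sigma> x))"
  by (simp add: cvars_def csubst_def avars_asubst qvars_map_lsubst)

lemma csubst_csubst: "csubst \<sigma> (csubst \<tau> c) = csubst (\<lambda>x. tsubst \<sigma> (\<tau> x)) c"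
  by (simp add: csubst_def asubst_asubst lsubst_lsubst)

lemma finite_cvars [simp]: "finite (cvars c)"
  by (simp add: cvars_def avars_def)

lemma unifier_Pair:
  "unifier \<theta> (p, ts) (p', us) \<longleftrightarrow> p = p' \<and> map (tsubst \<theta>) ts = map (tsubst \<theta>) us"
  by (simp add: unifier_def asubst_Pair)

lemma unifier_fst: "unifier \<theta> a b \<Longrightarrow> fst a = fst b"
  unfolding unifier_def by (metis fst_asubst)

lemma is_mgu_unifier: "is_mgu \<theta> a b \<Longrightarrow> unifier \<theta> a b"
  by (simp add: is_mgu_def)

lemma ld_resolventI:
  "c \<in> P \<Longrightarrow> renaming \<rho> \<Longrightarrow> cvars (csubst \<rho> c) \<inter> qvars (Pos A # R) = {} \<Longrightarrow>
   is_mgu \<theta> A (fst (csubst \<rho> c)) \<Longrightarrow> Q' = map (lsubst \<theta>) (snd (csubst \<rho> c) @ R) \<Longrightarrow>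
   ld_resolvent P (Pos A # R) Q'"
  unfolding ld_resolvent_def by blast

lemma ld_resolvent_Pos: "ld_resolvent P Q Q' \<Longrightarrow> \<exists>A R. Q = Pos A # R"
  by (auto simp: ld_resolvent_def)

section \<open>Variable renamings and variants\<close>

definition var_ren :: "(nat \<Rightarrow> nat) \<Rightarrow> 'f subst" where
  "var_ren f x = Var (f x)"

abbreviation qrename :: "(nat \<Rightarrow> nat) \<Rightarrow> 'f query \<Rightarrow> 'f query" where
  "qrename f Q \<equiv> map (lsubst (var_ren f)) Q"

lemma tvars_var_ren [simp]: "tvars (var_ren f x) = {f x}"
  by (simp add: var_ren_def)

lemma tsubst_var_ren [simp]: "tsubst \<sigma> (var_ren f x) = \<sigma> (f x)"
  by (simp add: var_ren_def)

lemma tsubst_var_ren_var_ren: "(\<lambda>x. tsubst (var_ren g) (var_ren f x)) = var_ren (g \<circ> f)"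
  by (rule ext) (simp add: var_ren_def)

lemma qrename_qrename: "qrename g (qrename f Q) = qrename (g \<circ> f) Q"
  by (simp add: lsubst_lsubst tsubst_var_ren_var_ren del: tsubst_var_ren)

lemma qrename_id: "qrename id Q = Q"
  by (rule map_lsubst_id) (simp add: var_ren_def)

lemma qrename_inv: "bij \<pi> \<Longrightarrow> qrename (inv \<pi>) (qrename \<pi> Q) = Q"
  by (simp only: qrename_qrename bij_is_inj inv_o_cancel qrename_id)

lemma qvars_qrename: "qvars (qrename f Q) = f ` qvars Q"
  by (auto simp: qvars_map_lsubst)

lemma ground_asubst_var_ren_iff: "ground_atom (asubst (var_ren f) A) \<longleftrightarrow> ground_atom A"
  by (simp add: ground_atom_def avars_asubst)

lemma renaming_iff_var_ren: "renaming \<rho> \<longleftrightarrow> (\<exists>r. inj r \<and> \<rho> = var_ren r)"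
proof
  assume "renaming \<rho>"
  then have v: "\<forall>x. \<exists>y. \<rho> x = Var y" and i: "inj \<rho>" by (auto simp: renaming_def)
  define r where "r x = (SOME y. \<rho> x = Var y)" for x
  have e: "\<rho> x = Var (r x)" for x using v by (metis (mono_tags) someI_ex r_def)
  then have "\<rho> = var_ren r" by (auto simp: var_ren_def)
  moreover have "inj r" using i e by (metis injI injD trm.inject(1))
  ultimately show "\<exists>r. inj r \<and> \<rho> = var_ren r" by blast
qed (auto simp: renaming_def var_ren_def inj_def)

lemma renaming_var_ren: "inj r \<Longrightarrow> renaming (var_ren r)"
  by (auto simp: renaming_iff_var_ren)

lemma finite_inj_on_extends_to_bij:
  fixes f :: "'a \<Rightarrow> 'a"
  assumes "finite D" and "inj_on f D"
  obtains \<pi> where "bij \<pi>" and "\<And>x. x \<in> D \<Longrightarrow> \<pi> x = f x"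
proof -
  let ?B = "f ` D"
  have "card (?B - D) = card (D - ?B)"
    using assms by (simp add: card_Diff_subset_Int card_image Int_commute)
  then obtain g where g: "bij_betw g (?B - D) (D - ?B)"
    using assms(1) by (metis finite_same_card_bij finite_Diff finite_imageI)
  define h where "h x = (if x \<in> D then f x else g x)" for x
  have "bij_betw f D ?B" using assms(2) by (simp add: bij_betw_def)
  then have "bij_betw h (D \<union> (?B - D)) (?B \<union> (D - ?B))"
    unfolding h_def using g by (intro bij_betw_disjoint_Un) auto
  then have "bij_betw h (D \<union> ?B) (D \<union> ?B)"
    by (simp add: Un_commute)
  then have "bij_betw (\<lambda>x. if x \<in> D \<union> ?B then h x else id x)
      ((D \<union> ?B) \<union> - (D \<union> ?B)) ((D \<union> ?B) \<union> - (D \<union> ?B))"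
    by (rule bij_betw_disjoint_Un[OF _ bij_betw_id]) auto
  then have "bij (\<lambda>x. if x \<in> D \<union> ?B then h x else x)"
    by (simp only: Compl_partition id_apply)
  then show thesis
    by (rule that) (simp add: h_def)
qed

lemma asubst_var_ren_inv:
  assumes "bij \<pi>" shows "asubst (var_ren \<pi>) (asubst (var_ren (inv \<pi>)) a) = a"
  using assms by (simp add: asubst_asubst var_ren_def bij_is_surj surj_f_inv_f)

lemma renaming_var_ren_comp:
  assumes "renaming \<rho>" and "inj \<pi>"
  shows "renaming (\<lambda>x. tsubst (var_ren \<pi>) (\<rho> x))"
proof -
  from assms(1) obtain r where "inj r" and "\<rho> = var_ren r"
    by (auto simp: renaming_iff_var_ren)
  then have "(\<lambda>x. tsubst (var_ren \<pi>) (\<rho> x)) = var_ren (\<pi> \<circ> r)" and "inj (\<pi> \<circ> r)"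
    using assms(2) by (auto simp: var_ren_def inj_compose)
  then show ?thesis by (auto simp: renaming_iff_var_ren)
qed

lemma is_mgu_var_ren:
  assumes "bij \<pi>" and "is_mgu \<theta> (asubst (var_ren \<pi>) a) (asubst (var_ren \<pi>) b)"
  shows "is_mgu (\<theta> \<circ> \<pi>) a b"
  unfolding is_mgu_def
proof (intro conjI allI impI)
  show "unifier (\<theta> \<circ> \<pi>) a b"
    using assms(2) by (simp add: is_mgu_def unifier_def asubst_asubst comp_def)
next
  fix \<sigma> assume "unifier \<sigma> a b"
  moreover have "\<sigma> = (\<sigma> \<circ> inv \<pi>) \<circ> \<pi>"
    using assms(1) by (simp add: fun_eq_iff bij_is_inj)
  ultimately have "unifier (\<sigma> \<circ> inv \<pi>) (asubst (var_ren \<pi>) a) (asubst (var_ren \<pi>) b)"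
    by (simp add: unifier_def asubst_asubst comp_def)
  then obtain \<delta> where "\<forall>x. (\<sigma> \<circ> inv \<pi>) x = tsubst \<delta> (\<theta> x)"
    using assms(2) unfolding is_mgu_def by blast
  then have "\<sigma> x = tsubst \<delta> ((\<theta> \<circ> \<pi>) x)" for x
    using assms(1) by (metis bij_is_inj comp_apply inv_f_f)
  then show "\<exists>\<delta>. \<forall>x. \<sigma> x = tsubst \<delta> ((\<theta> \<circ> \<pi>) x)" by blast
qed

lemma resolution_step_qrename:
  assumes bij: "bij \<pi>" and r: "renaming \<rho>"
    and apart: "cvars (csubst \<rho> c) \<inter> qvars (qrename \<pi> (Pos A # R)) = {}"
    and mgu: "is_mgu \<theta> (asubst (var_ren \<pi>) A) (fst (csubst \<rho> c))"
  defines "\<rho>' \<equiv> \<lambda>x. tsubst (var_ren (inv \<pi>)) (\<rho> x)"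
  shows "renaming \<rho>'" and "cvars (csubst \<rho>' c) = inv \<pi> ` cvars (csubst \<rho> c)"
    and "cvars (csubst \<rho>' c) \<inter> qvars (Pos A # R) = {}"
    and "is_mgu (\<theta> \<circ> \<pi>) A (fst (csubst \<rho>' c))"
    and "map (lsubst (\<theta> \<circ> \<pi>)) (snd (csubst \<rho>' c) @ R) =
         map (lsubst \<theta>) (snd (csubst \<rho> c) @ qrename \<pi> R)"
proof -
  have cs: "csubst \<rho>' c = csubst (var_ren (inv \<pi>)) (csubst \<rho> c)"
    by (simp add: \<rho>'_def csubst_csubst)
  show "renaming \<rho>'"
    unfolding \<rho>'_def using r bij by (simp add: renaming_var_ren_comp bij_imp_bij_inv bij_is_inj)
  show cv: "cvars (csubst \<rho>' c) = inv \<pi> ` cvars (csubst \<rho> c)"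
    by (auto simp: cs cvars_csubst)
  show "cvars (csubst \<rho>' c) \<inter> qvars (Pos A # R) = {}"
  proof (rule ccontr)
    assume "cvars (csubst \<rho>' c) \<inter> qvars (Pos A # R) \<noteq> {}"
    then obtain y where y: "y \<in> cvars (csubst \<rho> c)" and "inv \<pi> y \<in> qvars (Pos A # R)"
      unfolding cv by blast
    moreover have "\<pi> (inv \<pi> y) = y"
      using bij by (simp add: bij_is_surj surj_f_inv_f)
    ultimately have "y \<in> qvars (qrename \<pi> (Pos A # R))"
      unfolding qvars_qrename by (metis image_eqI)
    with y apart show False
      by (auto simp del: qvars_simps)
  qed
  have "asubst (var_ren \<pi>) (fst (csubst \<rho>' c)) = fst (csubst \<rho> c)"
    unfolding cs using bij by (simp add: csubst_def asubst_var_ren_inv)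
  then show "is_mgu (\<theta> \<circ> \<pi>) A (fst (csubst \<rho>' c))"
    using mgu by (intro is_mgu_var_ren[OF bij]) simp
  have "(\<lambda>x. tsubst (\<theta> \<circ> \<pi>) (\<rho>' x)) = (\<lambda>x. tsubst \<theta> (\<rho> x))"
    using bij by (simp add: \<rho>'_def tsubst_tsubst var_ren_def bij_is_surj surj_f_inv_f)
  then show "map (lsubst (\<theta> \<circ> \<pi>)) (snd (csubst \<rho>' c) @ R) =
      map (lsubst \<theta>) (snd (csubst \<rho> c) @ qrename \<pi> R)"
    by (simp add: csubst_def lsubst_lsubst comp_def)
qed

lemma ld_resolvent_of_qrename:
  assumes bij: "bij \<pi>" and res: "ld_resolvent P (qrename \<pi> Q) Q'"
  shows "ld_resolvent P Q Q'"
proof -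
  from res obtain A' R' c \<rho> \<theta> where q: "qrename \<pi> Q = Pos A' # R'" and c: "c \<in> P"
    and r: "renaming \<rho>" and apart: "cvars (csubst \<rho> c) \<inter> qvars (qrename \<pi> Q) = {}"
    and mgu: "is_mgu \<theta> A' (fst (csubst \<rho> c))"
    and Q': "Q' = map (lsubst \<theta>) (snd (csubst \<rho> c) @ R')"
    unfolding ld_resolvent_def by auto
  from q obtain A R where Q: "Q = Pos A # R" and A': "A' = asubst (var_ren \<pi>) A"
    and R': "R' = qrename \<pi> R"
    by (cases Q) (auto elim: lsubst.elims)
  have apart': "cvars (csubst \<rho> c) \<inter> qvars (qrename \<pi> (Pos A # R)) = {}"
    using apart Q by simp
  have mgu': "is_mgu \<theta> (asubst (var_ren \<pi>) A) (fst (csubst \<rho> c))"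
    using mgu A' by simp
  note step = resolution_step_qrename[OF bij r apart' mgu']
  show ?thesis
    unfolding Q using c step(1,3,4) by (rule ld_resolventI) (use step(5) R' Q' in simp)
qed

lemma ld_resolvent_qrename:
  assumes "bij \<pi>"
  shows "ld_resolvent P (qrename \<pi> Q) Q' \<longleftrightarrow> ld_resolvent P Q Q'"
proof
  assume "ld_resolvent P Q Q'"
  then have "ld_resolvent P (qrename (inv \<pi>) (qrename \<pi> Q)) Q'"
    using assms by (simp only: qrename_inv)
  then show "ld_resolvent P (qrename \<pi> Q) Q'"
    by (rule ld_resolvent_of_qrename[OF bij_imp_bij_inv[OF assms]])
next
  assume "ld_resolvent P (qrename \<pi> Q) Q'"
  then show "ld_resolvent P Q Q'"
    using assms by (rule ld_resolvent_of_qrename[rotated])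
qed

lemma
  assumes "bij \<pi>"
  shows ldnf_succeeds_qrename: "ldnf_succeeds P Q \<Longrightarrow> ldnf_succeeds P (qrename \<pi> Q)"
    and ldnf_ffails_qrename: "ldnf_ffails P Q \<Longrightarrow> ldnf_ffails P (qrename \<pi> Q)"
proof (induction rule: ldnf_succeeds_ldnf_ffails.inducts)
  case (succ_pos A R Q')
  then show ?case
    using ld_resolvent_qrename[OF assms, of P "Pos A # R"]
    by (auto intro: ldnf_succeeds_ldnf_ffails.succ_pos)
next
  case (ff_pos A R)
  then show ?case
    using ld_resolvent_qrename[OF assms, of P "Pos A # R"]
    by (auto intro!: ldnf_succeeds_ldnf_ffails.ff_pos)
qed (auto simp: ground_asubst intro: ldnf_succeeds_ldnf_ffails.intros)

definition variant :: "'f query \<Rightarrow> 'f query \<Rightarrow> bool" where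
  "variant Q1 Q2 \<longleftrightarrow> (\<exists>\<pi>. bij \<pi> \<and> Q2 = qrename \<pi> Q1)"

lemma variant_refl: "variant Q Q"
  unfolding variant_def by (intro exI[of _ id] conjI bij_id) (simp only: qrename_id)

lemma variant_sym: "variant Q1 Q2 \<Longrightarrow> variant Q2 Q1"
  unfolding variant_def by (metis bij_imp_bij_inv qrename_inv)

lemma variant_trans: "variant Q1 Q2 \<Longrightarrow> variant Q2 Q3 \<Longrightarrow> variant Q1 Q3"
  unfolding variant_def by (metis bij_comp qrename_qrename)

lemma variant_qrename: "inj_on f (qvars Q) \<Longrightarrow> variant Q (qrename f Q)"
proof -
  assume "inj_on f (qvars Q)"
  then obtain \<pi> where "bij \<pi>" and "\<And>x. x \<in> qvars Q \<Longrightarrow> \<pi> x = f x"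
    using finite_inj_on_extends_to_bij[OF finite_qvars] by blast
  moreover from this(2) have "qrename f Q = qrename \<pi> Q"
    by (intro map_lsubst_cong) (simp add: var_ren_def)
  ultimately show ?thesis unfolding variant_def by blast
qed

lemma ld_resolvent_variant: "variant Q1 Q2 \<Longrightarrow> ld_resolvent P Q2 Q' \<Longrightarrow> ld_resolvent P Q1 Q'"
  unfolding variant_def by (auto simp: ld_resolvent_qrename)

lemma ldnf_succeeds_variant: "variant Q1 Q2 \<Longrightarrow> ldnf_succeeds P Q1 \<Longrightarrow> ldnf_succeeds P Q2"
  unfolding variant_def by (auto intro: ldnf_succeeds_qrename)

lemma variant_Nil_iff: "variant Q [] \<longleftrightarrow> Q = []"
  by (auto simp: variant_def intro: bij_id)

lemma variant_Nil_left_iff: "variant [] Q \<longleftrightarrow> Q = []"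
  by (auto simp: variant_def intro: bij_id)

lemma variant_Cons_Cons:
  "variant (L' # Q') (L # Q) \<Longrightarrow> variant Q' Q \<and> (\<exists>\<pi>. L = lsubst (var_ren \<pi>) L')"
  by (auto simp: variant_def)

lemma ld_resolvent_fresh:
  assumes "ld_resolvent P Q Q'" and "finite X"
  obtains A R c \<rho> \<theta> where "Q = Pos A # R" and "c \<in> P" and "renaming \<rho>"
    and "cvars (csubst \<rho> c) \<inter> (qvars Q \<union> X) = {}" and "is_mgu \<theta> A (fst (csubst \<rho> c))"
    and "Q' = map (lsubst \<theta>) (snd (csubst \<rho> c) @ R)"
proof -
  from assms(1) obtain A R c \<rho> \<theta> where Q: "Q = Pos A # R" and c: "c \<in> P" and r: "renaming \<rho>"
    and apart: "cvars (csubst \<rho> c) \<inter> qvars Q = {}" and mgu: "is_mgu \<theta> A (fst (csubst \<rho> c))"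
    and Q': "Q' = map (lsubst \<theta>) (snd (csubst \<rho> c) @ R)"
    unfolding ld_resolvent_def by auto
  define S V where "S = cvars (csubst \<rho> c)" and "V = qvars Q"
  define N where "N = Suc (Max (V \<union> X \<union> S))"
  have below_N: "x < N" if "x \<in> V \<union> X \<union> S" for x
    using that assms(2) by (simp add: N_def V_def S_def le_imp_less_Suc)
  define f where "f x = (if x \<in> V then x else x + N)" for x
  have "inj_on f (V \<union> S)"
    using apart below_N[of "_ + N"] by (auto simp: inj_on_def f_def S_def V_def)
  then obtain \<pi> where bij: "bij \<pi>" and \<pi>: "\<And>x. x \<in> V \<union> S \<Longrightarrow> \<pi> x = f x"
    using finite_inj_on_extends_to_bij[of "V \<union> S" f] by (auto simp: V_def S_def)
  have bij': "bij (inv \<pi>)" and inv_inv: "inv (inv \<pi>) = \<pi>"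
    using bij by (simp_all add: bij_imp_bij_inv inv_inv_eq)
  have "inv \<pi> x = x" if "x \<in> V" for x
    using \<pi>[of x] that bij by (simp add: f_def bij_is_inj inv_f_eq)
  then have "qrename (inv \<pi>) Q = Q"
    by (intro map_lsubst_id) (simp add: var_ren_def V_def)
  then have apart': "cvars (csubst \<rho> c) \<inter> qvars (qrename (inv \<pi>) (Pos A # R)) = {}"
    and mgu': "is_mgu \<theta> (asubst (var_ren (inv \<pi>)) A) (fst (csubst \<rho> c))"
    and R: "qrename (inv \<pi>) R = R"
    using apart mgu by (simp_all add: Q)
  note step = resolution_step_qrename[OF bij' r apart' mgu', unfolded inv_inv R]
  have "\<pi> y \<notin> V \<union> X" if "y \<in> S" for y
    using that apart \<pi>[of y] below_N by (fastforce simp: f_def S_def V_def)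
  then have "cvars (csubst (\<lambda>x. tsubst (var_ren \<pi>) (\<rho> x)) c) \<inter> (qvars Q \<union> X) = {}"
    unfolding step(2) by (auto simp: S_def V_def)
  from that[OF Q c step(1) this step(4)] show thesis
    using step(5) Q' by simp
qed

section \<open>The encoding of object terms\<close>

lemma tvars_map_trm [simp]: "tvars (map_trm g t) = tvars t"
  by (induction t) auto

lemma tsubst_map_trm_Usr:
  "(\<And>x. x \<in> tvars t \<Longrightarrow> \<theta> x = map_trm Usr (\<sigma> x)) \<Longrightarrow>
   tsubst \<theta> (map_trm Usr t) = map_trm Usr (tsubst \<sigma> t)"
  by (induction t) auto

definition atom_trm :: "'f atom \<Rightarrow> 'f trm" where
  "atom_trm a = Fn (fst a) (snd a)"

lemma tsubst_atom_trm: "tsubst \<sigma> (atom_trm a) = atom_trm (asubst \<sigma> a)"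
  by (simp add: atom_trm_def asubst_def)

lemma atom_trm_inject: "atom_trm a = atom_trm b \<longleftrightarrow> a = b"
  by (cases a; cases b) (auto simp: atom_trm_def)

lemma tvars_atom_trm: "tvars (atom_trm a) = avars a"
  by (simp add: atom_trm_def avars_def)

lemma enc_atom_eq: "enc_atom a = map_trm Usr (atom_trm a)"
  by (simp add: enc_atom_def atom_trm_def)

lemma tvars_enc_atom [simp]: "tvars (enc_atom a) = avars a"
  by (simp add: enc_atom_def avars_def)

lemma tvars_enc_lit [simp]: "tvars (enc_lit l) = lvars l"
  by (cases l) auto

lemma tvars_enc_body [simp]: "tvars (enc_body Q) = qvars Q"
  by (induction Q rule: enc_body.induct) auto

lemma enc_atom_subst:
  "(\<And>x. x \<in> avars a \<Longrightarrow> \<theta> x = map_trm Usr (\<sigma> x)) \<Longrightarrow>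
   tsubst \<theta> (enc_atom a) = enc_atom (asubst \<sigma> a)"
  unfolding enc_atom_eq tsubst_atom_trm[symmetric]
  by (rule tsubst_map_trm_Usr) (simp add: atom_trm_def avars_def)

lemma enc_lit_subst:
  "(\<And>x. x \<in> lvars l \<Longrightarrow> \<theta> x = map_trm Usr (\<sigma> x)) \<Longrightarrow>
   tsubst \<theta> (enc_lit l) = enc_lit (lsubst \<sigma> l)"
  by (cases l) (auto simp: enc_atom_subst)

lemma enc_body_subst:
  "(\<And>x. x \<in> qvars Q \<Longrightarrow> \<theta> x = map_trm Usr (\<sigma> x)) \<Longrightarrow>
   tsubst \<theta> (enc_body Q) = enc_body (map (lsubst \<sigma>) Q)"
  by (induction Q rule: enc_body.induct) (auto simp: enc_lit_subst)

lemma tsubst_enc_body_TrueSym: "tsubst \<theta> (enc_body q) = Fn TrueSym ts \<Longrightarrow> q = []"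
proof (induction q rule: enc_body.induct)
  case (2 L)
  then show ?case by (cases L) (auto simp: enc_atom_def)
qed auto

lemma tsubst_enc_body_NegSym:
  assumes "tsubst \<theta> (enc_body q) = Fn NegSym ts"
  obtains A where "q = [Neg A]"
  using assms
proof (induction q rule: enc_body.induct)
  case (2 L)
  then show ?case by (cases L) (auto simp: enc_atom_def)
qed auto

lemma tsubst_enc_body_Comma:
  assumes "tsubst \<theta> (enc_body q) = Fn Comma ts"
  obtains L L' Ls where "q = L # L' # Ls"
  using assms
proof (induction q rule: enc_body.induct)
  case (2 L)
  then show ?case by (cases L) (auto simp: enc_atom_def)
qed auto

lemma enc_body_cases_Usr:
  obtains A where "q = [Pos A]"
  | s ts where "enc_body q = Fn s ts" and "\<forall>f. s \<noteq> Usr f"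
proof (induction q rule: enc_body.induct)
  case (2 L)
  then show ?case by (cases L) auto
qed auto

text \<open>Only meaningful on encodings; foreign subterms are mapped to the junk term \<open>Var 0\<close>.\<close>

fun decode :: "'f msym trm \<Rightarrow> 'f trm" where
  "decode (Var x) = Var x"
| "decode (Fn (Usr f) ts) = Fn f (map decode ts)"
| "decode (Fn _ ts) = Var 0"

lemma decode_map_trm_Usr [simp]: "decode (map_trm Usr t) = t"
  by (induction t) (auto simp: map_idI)

lemma decode_tsubst: "decode (tsubst \<theta> (map_trm Usr t)) = tsubst (\<lambda>x. decode (\<theta> x)) t"
  by (induction t) auto

lemma map_trm_Usr_decode_if_instance: "tsubst \<delta> t = map_trm Usr s \<Longrightarrow> t = map_trm Usr (decode t)"
proof (induction t arbitrary: s)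
  case (Fn g ts)
  then obtain f ss where "g = Usr f" and ts: "map (tsubst \<delta>) ts = map (map_trm Usr) ss"
    by (cases s) auto
  moreover have "t = map_trm Usr (decode t)" if "t \<in> set ts" for t
  proof -
    from that obtain i where "i < length ts" "ts ! i = t" by (metis in_set_conv_nth)
    moreover have "length ss = length ts" using ts by (metis length_map)
    ultimately have "tsubst \<delta> t = map_trm Usr (ss ! i)" using ts by (metis nth_map)
    then show ?thesis using Fn.IH that by blast
  qed
  ultimately show ?case by (auto intro: map_idI[symmetric])
qed simp

section \<open>Most general unifiers\<close>

lemma is_mguI_idem:
  assumes "unifier \<theta> a b" and "\<And>\<sigma> x. unifier \<sigma> a b \<Longrightarrow> \<sigma> x = tsubst \<sigma> (\<theta> x)"
  shows "is_mgu \<theta> a b"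
  using assms unfolding is_mgu_def by blast

lemma mgu_renames_fixed_vars:
  assumes "is_mgu \<theta> a b" and "unifier \<sigma> a b" and "\<And>x. x \<in> D \<Longrightarrow> \<sigma> x = Var x"
  obtains f where "inj_on f D" and "\<And>x. x \<in> D \<Longrightarrow> \<theta> x = Var (f x)"
proof -
  obtain \<delta> where \<delta>: "\<And>x. \<sigma> x = tsubst \<delta> (\<theta> x)"
    using assms(1,2) unfolding is_mgu_def by blast
  define f where "f x = (case \<theta> x of Var y \<Rightarrow> y | _ \<Rightarrow> 0)" for x
  have f: "\<theta> x = Var (f x)" "\<delta> (f x) = Var x" if "x \<in> D" for x
  proof -
    have "tsubst \<delta> (\<theta> x) = Var x"
      using \<delta>[of x] assms(3)[OF that] by simp
    then obtain y where "\<theta> x = Var y" and "\<delta> y = Var x"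
      using tsubst_eq_Var by blast
    then show "\<theta> x = Var (f x)" "\<delta> (f x) = Var x"
      by (simp_all add: f_def)
  qed
  have "inj_on f D"
  proof (rule inj_onI)
    fix x y assume "x \<in> D" "y \<in> D" "f x = f y"
    then have "Var x = (Var y :: 'a trm)"
      using f(2) by metis
    then show "x = y" by simp
  qed
  with f(1) show thesis using that by blast
qed

text \<open>Changing \<open>\<theta>\<close> at a variable outside the atoms yields another unifier; that it factors
  through \<open>\<theta>\<close> forces \<open>\<theta> x\<close> to be a variable occurring in no other \<open>\<theta> y\<close>.\<close>

lemma mgu_Var_outside:
  assumes mgu: "is_mgu \<theta> a b" and x: "x \<notin> avars a \<union> avars b"
  obtains v where "\<theta> x = Var v" and "\<And>y. y \<noteq> x \<Longrightarrow> v \<notin> tvars (\<theta> y)"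
proof -
  have "unifier (\<theta>(x := t)) a b" for t
  proof -
    have "asubst (\<theta>(x := t)) c = asubst \<theta> c" if "c \<in> {a, b}" for c
      by (rule asubst_cong) (use x that in auto)
    then show ?thesis
      using is_mgu_unifier[OF mgu] by (simp add: unifier_def)
  qed
  then have factor: "\<exists>\<delta>. \<forall>y. (\<theta>(x := t)) y = tsubst \<delta> (\<theta> y)" for t
    using mgu unfolding is_mgu_def by blast
  obtain v where v: "\<theta> x = Var v"
  proof -
    obtain \<delta> where "\<forall>y. (\<theta>(x := Var 0)) y = tsubst \<delta> (\<theta> y)"
      using factor by blast
    from this[rule_format, of x] have "tsubst \<delta> (\<theta> x) = Var 0" by simp
    then show thesis using tsubst_eq_Var that by blast
  qed
  have "v \<notin> tvars (\<theta> y)" if "y \<noteq> x" for y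
  proof
    assume v_in: "v \<in> tvars (\<theta> y)"
    obtain \<delta> where \<delta>: "\<forall>z. (\<theta>(x := Var (Suc v))) z = tsubst \<delta> (\<theta> z)"
      using factor by blast
    from \<delta>[rule_format, of y] that have "tsubst \<delta> (\<theta> y) = \<theta> y" by simp
    then have "\<delta> v = Var v" using v_in by (rule tsubst_fixpoint_Var)
    moreover have "\<delta> v = Var (Suc v)" using \<delta>[rule_format, of x] v by simp
    ultimately show False by simp
  qed
  with v show thesis using that by blast
qed

text \<open>Skolemization turns a meta-level term into an object term by replacing its foreign
  subterms, the maximal ones headed by a meta-level symbol, with odd-numbered variables; the
  variables themselves move to the even numbers, so nothing is captured.\<close>

fun foreign_subterms :: "'f msym trm \<Rightarrow> 'f msym trm set" where
  "foreign_subterms (Var x) = {}"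
| "foreign_subterms (Fn (Usr f) ts) = \<Union> (set (map foreign_subterms ts))"
| "foreign_subterms (Fn h ts) = {Fn h ts}"

lemma finite_foreign_subterms [simp]: "finite (foreign_subterms t)"
proof (induction t)
  case (Fn h ts)
  then show ?case by (cases h) auto
qed simp

fun skolemize :: "('f msym trm \<Rightarrow> nat) \<Rightarrow> 'f msym trm \<Rightarrow> 'f trm" where
  "skolemize g (Var x) = Var (2 * x)"
| "skolemize g (Fn (Usr f) ts) = Fn f (map (skolemize g) ts)"
| "skolemize g (Fn h ts) = Var (2 * g (Fn h ts) + 1)"

definition unskolemize :: "'f msym trm set \<Rightarrow> ('f msym trm \<Rightarrow> nat) \<Rightarrow> 'f msym subst" where
  "unskolemize T g n = (if even n then Var (n div 2) else the_inv_into T g (n div 2))"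

lemma skolemize_tsubst:
  "skolemize g (tsubst \<sigma> (map_trm Usr t)) = tsubst (\<lambda>x. skolemize g (\<sigma> x)) t"
  by (induction t) auto

lemma unskolemize_skolemize:
  assumes "foreign_subterms u \<subseteq> T" and "inj_on g T"
  shows "tsubst (unskolemize T g) (map_trm Usr (skolemize g u)) = u"
  using assms(1)
proof (induction u)
  case (Fn h ts)
  show ?case
  proof (cases "\<exists>f. h = Usr f")
    case True
    then obtain f where h: "h = Usr f" by blast
    then have "\<forall>t\<in>set ts. tsubst (unskolemize T g) (map_trm Usr (skolemize g t)) = t"
      using Fn by auto
    with h show ?thesis by (auto intro: map_idI)
  next
    case False
    then have "Fn h ts \<in> T" using Fn.prems by (cases h) auto
    with False assms(2) show ?thesis
      by (cases h) (auto simp: unskolemize_def the_inv_into_f_f)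
  qed
qed (simp add: unskolemize_def)

lemma skolemize_enc_atom:
  "skolemize g (tsubst \<sigma> (enc_atom a)) = atom_trm (asubst (\<lambda>x. skolemize g (\<sigma> x)) a)"
  by (simp add: enc_atom_eq skolemize_tsubst tsubst_atom_trm)

lemma mgu_renames_outside:
  assumes mgu: "is_mgu \<theta> a b"
  defines "V \<equiv> avars a \<union> avars b"
  obtains v where "inj_on v (- V)" and "\<And>x. x \<notin> V \<Longrightarrow> \<theta> x = Var (v x)"
    and "\<And>x y. x \<notin> V \<Longrightarrow> y \<noteq> x \<Longrightarrow> v x \<notin> tvars (\<theta> y)"
proof -
  define v where "v x = (case \<theta> x of Var y \<Rightarrow> y | _ \<Rightarrow> 0)" for x
  have outside: "\<theta> x = Var (v x)" "\<And>y. y \<noteq> x \<Longrightarrow> v x \<notin> tvars (\<theta> y)" if "x \<notin> V" for x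
  proof -
    from that have "x \<notin> avars a \<union> avars b" by (simp add: V_def)
    then obtain w where "\<theta> x = Var w" and "\<And>y. y \<noteq> x \<Longrightarrow> w \<notin> tvars (\<theta> y)"
      by (rule mgu_Var_outside[OF mgu]) blast
    then show "\<theta> x = Var (v x)" "\<And>y. y \<noteq> x \<Longrightarrow> v x \<notin> tvars (\<theta> y)"
      by (simp_all add: v_def)
  qed
  moreover have "inj_on v (- V)"
  proof (rule inj_onI)
    fix x y assume "x \<in> - V" "y \<in> - V" "v x = v y"
    then show "x = y"
      using outside(1)[of x] outside(2)[of y x] by (cases "x = y") auto
  qed
  ultimately show thesis using that by blast
qed

text \<open>Skolemizing a meta-level unifier \<open>\<sigma>\<close> gives an object-level one, which factors through \<open>\<theta>\<close>;
  unskolemizing the factor recovers \<open>\<sigma>\<close> on the variables of the atoms, and on the other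
  variables \<open>\<theta>\<close> is a renaming to private variables, which can be sent to \<open>\<sigma>\<close> directly.\<close>

lemma mgu_factors_meta_unifier:
  assumes mgu: "is_mgu \<theta> a b"
    and unif: "tsubst \<sigma> (enc_atom a) = tsubst \<sigma> (enc_atom b)"
  obtains \<delta> where "\<And>x. \<sigma> x = tsubst \<delta> (map_trm Usr (\<theta> x))"
proof -
  define V where "V = avars a \<union> avars b"
  obtain v where inj_v: "inj_on v (- V)" and outside: "\<And>x. x \<notin> V \<Longrightarrow> \<theta> x = Var (v x)"
    and disjoint: "\<And>x y. x \<notin> V \<Longrightarrow> y \<noteq> x \<Longrightarrow> v x \<notin> tvars (\<theta> y)"
    using mgu_renames_outside[OF mgu] unfolding V_def by blast
  define T where "T = (\<Union>x\<in>V. foreign_subterms (\<sigma> x))"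
  have "finite T" by (simp add: T_def V_def)
  then obtain g :: "'a msym trm \<Rightarrow> nat" where g: "inj_on g T"
    using finite_imp_inj_to_nat_seg by blast
  have "unifier (\<lambda>x. skolemize g (\<sigma> x)) a b"
    using arg_cong[OF unif, of "skolemize g"]
    by (simp add: skolemize_enc_atom atom_trm_inject unifier_def)
  then obtain \<delta>o where \<delta>o: "\<And>x. skolemize g (\<sigma> x) = tsubst \<delta>o (\<theta> x)"
    using mgu unfolding is_mgu_def by blast
  define \<delta> where "\<delta> k = (if k \<in> v ` (- V) then \<sigma> (inv_into (- V) v k)
     else tsubst (unskolemize T g) (map_trm Usr (\<delta>o k)))" for k
  have "\<sigma> x = tsubst \<delta> (map_trm Usr (\<theta> x))" for x
  proof (cases "x \<in> V")
    case False
    with outside inj_v show ?thesis by (simp add: \<delta>_def inv_into_f_f)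
  next
    case True
    have "k \<notin> v ` (- V)" if "k \<in> tvars (\<theta> x)" for k
    proof
      assume "k \<in> v ` (- V)"
      then obtain y where "y \<notin> V" and "k = v y" by blast
      with True that disjoint[of y x] show False by auto
    qed
    then have "tsubst \<delta> (map_trm Usr (\<theta> x)) =
        tsubst (\<lambda>k. tsubst (unskolemize T g) (map_trm Usr (\<delta>o k))) (map_trm Usr (\<theta> x))"
      by (intro tsubst_cong) (simp add: \<delta>_def)
    also have "\<dots> = tsubst (unskolemize T g) (tsubst (\<lambda>k. map_trm Usr (\<delta>o k)) (map_trm Usr (\<theta> x)))"
      by (simp only: tsubst_tsubst)
    also have "\<dots> = tsubst (unskolemize T g) (map_trm Usr (skolemize g (\<sigma> x)))"
      by (subst tsubst_map_trm_Usr[of _ _ \<delta>o]) (simp_all add: \<delta>o)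
    also have "\<dots> = \<sigma> x"
      by (rule unskolemize_skolemize[OF _ g]) (use True in \<open>auto simp: T_def\<close>)
    finally show ?thesis by simp
  qed
  with that show thesis by blast
qed

section \<open>Goals of the meta-interpreter\<close>

abbreviation meta_program :: "'f clause set \<Rightarrow> 'f msym clause set" where
  "meta_program P \<equiv> M4 \<union> ce P"

definition clause_fact :: "'f clause \<Rightarrow> 'f msym clause" where
  "clause_fact c = ((ClauseSym, [enc_atom (fst c), enc_body (snd c)]), [])"

lemma ce_eq_image_clause_fact: "ce P = clause_fact ` P"
  by (simp add: ce_def clause_fact_def)

lemma cvars_clause_fact [simp]: "cvars (clause_fact c) = cvars c"
  by (simp add: clause_fact_def cvars_def avars_def)

lemma csubst_clause_fact: "csubst (var_ren r) (clause_fact c) = clause_fact (csubst (var_ren r) c)"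
proof -
  have "(var_ren r x :: 'a msym trm) = map_trm Usr (var_ren r x)" for x
    by (simp add: var_ren_def)
  then show ?thesis
    by (simp add: clause_fact_def csubst_def asubst_def enc_atom_subst enc_body_subst)
qed

definition solve_lit :: "'f query \<Rightarrow> 'f msym lit" where
  "solve_lit q = Pos (Solve, [enc_body q])"

text \<open>The goal lists of \<open>M4 \<union> ce P\<close> reachable from \<open>solve(Q)\<close>, other than the stuck ones
  below: \<open>Solving Qs\<close> is \<open>solve(q\<^sub>1), \<dots>, solve(q\<^sub>n)\<close>, \<open>Negating A Qs\<close> is
  \<open>\<not>solve(A)\<close> followed by these, and \<open>Calling A b Qs\<close> is \<open>clause(A, b), solve(b)\<close> followed by
  these, with \<open>b\<close> a fresh variable for the body of the clause still to be chosen.\<close>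

datatype 'f meta_goal =
  Solving "'f query list"
| Negating "'f atom" "'f query list"
| Calling "'f atom" nat "'f query list"

fun meta_query :: "'f meta_goal \<Rightarrow> 'f msym query" where
  "meta_query (Solving Qs) = map solve_lit Qs"
| "meta_query (Negating A Qs) = Neg (Solve, [enc_atom A]) # map solve_lit Qs"
| "meta_query (Calling A b Qs) =
     Pos (ClauseSym, [enc_atom A, Var b]) # Pos (Solve, [Var b]) # map solve_lit Qs"

fun object_query :: "'f meta_goal \<Rightarrow> 'f query" where
  "object_query (Solving Qs) = concat Qs"
| "object_query (Negating A Qs) = Neg A # concat Qs"
| "object_query (Calling A b Qs) = Pos A # concat Qs"

fun wf_goal :: "'f meta_goal \<Rightarrow> bool" where
  "wf_goal (Calling A b Qs) \<longleftrightarrow> b \<notin> avars A \<and> b \<notin> qvars (concat Qs)"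
| "wf_goal _ \<longleftrightarrow> True"

definition administrative :: "'f meta_goal \<Rightarrow> bool" where
  "administrative F \<longleftrightarrow> (\<exists>q Qs. F = Solving (q # Qs))"

lemma administrative_Solving_iff [simp]: "administrative (Solving Qs) \<longleftrightarrow> Qs \<noteq> []"
  by (cases Qs) (auto simp: administrative_def)

text \<open>The number of administrative steps needed to expose the first object literal.\<close>

fun admin_measure_list :: "'f query list \<Rightarrow> nat" where
  "admin_measure_list [] = 0"
| "admin_measure_list ([] # Qs) = Suc (admin_measure_list Qs)"
| "admin_measure_list ([L] # Qs) = 1"
| "admin_measure_list ((L # L' # Ls) # Qs) = 2"

fun admin_measure :: "'f meta_goal \<Rightarrow> nat" where
  "admin_measure (Solving Qs) = admin_measure_list Qs"
| "admin_measure _ = 0"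

lemma admin_measure_list_map [simp]: "admin_measure_list (map (map g) Qs) = admin_measure_list Qs"
  by (induction Qs rule: admin_measure_list.induct) auto

text \<open>The fourth clause of \<open>M4\<close> applied to \<open>solve(true)\<close>, \<open>solve((A, B))\<close> or \<open>solve(\<not>A)\<close>
  selects a \<open>clause\<close> atom that no clause of \<open>M4 \<union> ce P\<close> matches.\<close>

definition stuck :: "'f msym query \<Rightarrow> bool" where
  "stuck M \<longleftrightarrow> (\<exists>s ts t R. M = Pos (ClauseSym, [Fn s ts, t]) # R \<and> (\<forall>f. s \<noteq> Usr f))"

lemma lvars_solve_lit [simp]: "lvars (solve_lit q) = qvars q"
  by (simp add: solve_lit_def avars_def)

lemma qvars_map_solve_lit [simp]: "qvars (map solve_lit Qs) = qvars (concat Qs)"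
  by (induction Qs) auto

lemma qvars_concat_map: "qvars (concat (map (map (lsubst \<sigma>)) Qs)) = (\<Union>x\<in>qvars (concat Qs). tvars (\<sigma> x))"
  by (induction Qs) (auto simp: qvars_map_lsubst)

lemma map_solve_lit_subst:
  "(\<And>x. x \<in> qvars (concat Qs) \<Longrightarrow> \<theta> x = map_trm Usr (\<sigma> x)) \<Longrightarrow>
   map (lsubst \<theta>) (map solve_lit Qs) = map solve_lit (map (map (lsubst \<sigma>)) Qs)"
  by (induction Qs) (auto simp: solve_lit_def asubst_Pair enc_body_subst)

lemma solve_lit_single_Pos [simp]: "solve_lit [Pos A] = Pos (Solve, [enc_atom A])"
  by (simp add: solve_lit_def)

lemma ground_atom_Solve_iff [simp]: "ground_atom (Solve, [enc_atom A]) \<longleftrightarrow> ground_atom A"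
  by (simp add: ground_atom_def avars_Pair)

lemma map_trm_var_ren [simp]: "map_trm g (var_ren f x) = Var (f x)"
  by (simp add: var_ren_def)

lemma meta_query_Nil: "meta_query F = [] \<Longrightarrow> object_query F = []"
  by (cases F) auto

lemma meta_query_Pos_cases:
  assumes "meta_query F = Pos B # R"
  obtains "administrative F" | A b Qs where "F = Calling A b Qs"
  using assms by (cases F) (auto simp: administrative_def)

lemma meta_query_Neg_cases:
  assumes "meta_query F = Neg B # R"
  obtains A Qs where "F = Negating A Qs" and "B = (Solve, [enc_atom A])"
    and "R = meta_query (Solving Qs)"
  using assms by (cases F) (auto simp: solve_lit_def)

lemma M4_cases:
  assumes "c \<in> M4"
  obtains "c = ((Solve, [Fn TrueSym []]), [])"
  | "c = ((Solve, [Fn Comma [Var 0, Var 1]]), [Pos (Solve, [Var 0]), Pos (Solve, [Var 1])])"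
  | "c = ((Solve, [Fn NegSym [Var 0]]), [Neg (Solve, [Var 0])])"
  | "c = ((Solve, [Var 0]), [Pos (ClauseSym, [Var 0, Var 1]), Pos (Solve, [Var 1])])"
  using assms by (auto simp: M4_def)

lemma stuck_no_ld_resolvent: "stuck M \<Longrightarrow> \<not> ld_resolvent (meta_program P) M M'"
proof
  assume "stuck M" and res: "ld_resolvent (meta_program P) M M'"
  then obtain s ts t R where M: "M = Pos (ClauseSym, [Fn s ts, t]) # R" and s: "\<forall>f. s \<noteq> Usr f"
    unfolding stuck_def by blast
  from res obtain c \<rho> \<theta> where c: "c \<in> meta_program P"
    and mgu: "is_mgu \<theta> (ClauseSym, [Fn s ts, t]) (fst (csubst \<rho> c))"
    unfolding M ld_resolvent_def by blast
  note u = is_mgu_unifier[OF mgu]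
  show False
  proof (cases "c \<in> M4")
    case True
    then show False using unifier_fst[OF u] by (auto simp: M4_def csubst_def)
  next
    case False
    then obtain c0 where "c = clause_fact c0"
      using c by (auto simp: ce_eq_image_clause_fact)
    with u s show False
      by (simp add: clause_fact_def csubst_def unifier_Pair asubst_Pair enc_atom_def)
  qed
qed

lemma stuck_not_ldnf_succeeds: "stuck M \<Longrightarrow> \<not> ldnf_succeeds (meta_program P) M"
  using stuck_no_ld_resolvent[of M P] by (auto simp: stuck_def elim: ldnf_succeeds.cases)

section \<open>Administrative steps\<close>

definition admin_successor :: "'f meta_goal \<Rightarrow> 'f msym query \<Rightarrow> bool" where
  "admin_successor F M' \<longleftrightarrow> stuck M' \<or>
     (\<exists>F'. wf_goal F' \<and> M' = meta_query F' \<and> admin_measure F' < admin_measure F \<and>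
       variant (object_query F) (object_query F'))"

lemma admin_successorI:
  assumes "wf_goal F'" and "M' = meta_query F'" and "admin_measure F' < admin_measure F"
    and "inj_on f (qvars (object_query F))" and "object_query F' = qrename f (object_query F)"
  shows "admin_successor F M'"
  unfolding admin_successor_def
  by (intro disjI2 exI[of _ F']) (use assms variant_qrename[OF assms(4)] in simp)

lemma Solving_resolvent_cases:
  assumes "ld_resolvent (meta_program P) (meta_query (Solving (q # Qs))) M'"
  obtains c r \<theta> where "c \<in> M4" and "inj r"
    and "cvars (csubst (var_ren r) c) \<inter> qvars (concat (q # Qs)) = {}"
    and "is_mgu \<theta> (Solve, [enc_body q]) (fst (csubst (var_ren r) c))"
    and "M' = map (lsubst \<theta>) (snd (csubst (var_ren r) c) @ map solve_lit Qs)"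
proof -
  let ?M = "Pos (Solve, [enc_body q]) # map solve_lit Qs"
  have M: "meta_query (Solving (q # Qs)) = ?M" and qv: "qvars ?M = qvars (concat (q # Qs))"
    by (simp_all add: solve_lit_def avars_Pair)
  from assms obtain c \<rho> \<theta> where c: "c \<in> meta_program P" and r: "renaming \<rho>"
    and apart: "cvars (csubst \<rho> c) \<inter> qvars ?M = {}"
    and mgu: "is_mgu \<theta> (Solve, [enc_body q]) (fst (csubst \<rho> c))"
    and M': "M' = map (lsubst \<theta>) (snd (csubst \<rho> c) @ map solve_lit Qs)"
    unfolding ld_resolvent_def M by blast
  have "c \<notin> ce P"
    using unifier_fst[OF is_mgu_unifier[OF mgu]]
    by (auto simp: ce_eq_image_clause_fact clause_fact_def csubst_def)
  moreover obtain r where "inj r" and "\<rho> = var_ren r"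
    using r by (auto simp: renaming_iff_var_ren)
  ultimately show thesis
    using that c apart mgu M' unfolding qv by blast
qed

lemma admin_step_true:
  assumes mgu: "is_mgu \<theta> (Solve, [enc_body q]) (Solve, [Fn TrueSym []])"
  shows "admin_successor (Solving (q # Qs)) (map (lsubst \<theta>) (map solve_lit Qs))"
proof -
  have "tsubst \<theta> (enc_body q) = Fn TrueSym []"
    using is_mgu_unifier[OF mgu] by (simp add: unifier_Pair)
  then have q: "q = []"
    by (rule tsubst_enc_body_TrueSym)
  then have "unifier Var (Solve, [enc_body q]) (Solve, [Fn TrueSym []])"
    by (simp add: unifier_def)
  then obtain f where f: "inj_on f UNIV" and \<theta>: "\<And>x. x \<in> UNIV \<Longrightarrow> \<theta> x = Var (f x)"
    by (rule mgu_renames_fixed_vars[OF mgu, where D = UNIV]) auto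
  show ?thesis
  proof (rule admin_successorI[of "Solving (map (qrename f) Qs)" _ _ f])
    show "map (lsubst \<theta>) (map solve_lit Qs) = meta_query (Solving (map (qrename f) Qs))"
      unfolding meta_query.simps by (rule map_solve_lit_subst) (simp add: \<theta>)
    show "inj_on f (qvars (object_query (Solving (q # Qs))))"
      using f by (rule inj_on_subset) simp
  qed (simp_all add: q map_concat)
qed

lemma admin_step_conj:
  assumes ab: "a \<noteq> b" and fresh: "a \<notin> qvars (concat (q # Qs))" "b \<notin> qvars (concat (q # Qs))"
    and mgu: "is_mgu \<theta> (Solve, [enc_body q]) (Solve, [Fn Comma [Var a, Var b]])"
  shows "admin_successor (Solving (q # Qs))
    (map (lsubst \<theta>) ([Pos (Solve, [Var a]), Pos (Solve, [Var b])] @ map solve_lit Qs))"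
proof -
  have e: "tsubst \<theta> (enc_body q) = Fn Comma [\<theta> a, \<theta> b]"
    using is_mgu_unifier[OF mgu] by (simp add: unifier_Pair)
  then obtain L L' Ls where q: "q = L # L' # Ls"
    by (rule tsubst_enc_body_Comma)
  define \<sigma> where "\<sigma> = (Var(a := enc_lit L, b := enc_body (L' # Ls)) :: 'a msym subst)"
  have "tsubst \<sigma> (enc_body q) = enc_body q"
    by (rule tsubst_id) (use fresh in \<open>auto simp: \<sigma>_def q\<close>)
  then have "unifier \<sigma> (Solve, [enc_body q]) (Solve, [Fn Comma [Var a, Var b]])"
    using ab by (simp add: unifier_Pair \<sigma>_def q)
  then obtain f where f: "inj_on f (- {a, b})" and \<theta>: "\<And>x. x \<in> - {a, b} \<Longrightarrow> \<theta> x = Var (f x)"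
    by (rule mgu_renames_fixed_vars[OF mgu, where D = "- {a, b}"]) (auto simp: \<sigma>_def)
  have sub: "qvars (concat (q # Qs)) \<subseteq> - {a, b}"
    using fresh by auto
  then have \<theta>': "\<theta> x = Var (f x)" if "x \<in> qvars (concat (q # Qs))" for x
    using \<theta>[of x] that sub by auto
  define F' where "F' = Solving ([lsubst (var_ren f) L] # qrename f (L' # Ls) # map (qrename f) Qs)"
  show ?thesis
  proof (rule admin_successorI[of F' _ _ f])
    have "\<theta> a = tsubst \<theta> (enc_lit L)" and "\<theta> b = tsubst \<theta> (enc_body (L' # Ls))"
      using e by (simp_all add: q)
    moreover have "tsubst \<theta> (enc_lit L) = enc_lit (lsubst (var_ren f) L)"
      by (rule enc_lit_subst) (auto simp: q intro!: \<theta>')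
    moreover have "tsubst \<theta> (enc_body (L' # Ls)) = enc_body (qrename f (L' # Ls))"
      by (rule enc_body_subst) (auto simp: q intro!: \<theta>')
    moreover have "map (lsubst \<theta>) (map solve_lit Qs) = map solve_lit (map (qrename f) Qs)"
      by (rule map_solve_lit_subst) (auto intro!: \<theta>')
    ultimately show "map (lsubst \<theta>) ([Pos (Solve, [Var a]), Pos (Solve, [Var b])] @ map solve_lit Qs)
        = meta_query F'"
      by (simp add: F'_def solve_lit_def asubst_Pair)
    show "inj_on f (qvars (object_query (Solving (q # Qs))))"
      using f sub by (auto intro: inj_on_subset)
  qed (simp_all add: F'_def q map_concat)
qed

lemma admin_step_neg:
  assumes fresh: "a \<notin> qvars (concat (q # Qs))"
    and mgu: "is_mgu \<theta> (Solve, [enc_body q]) (Solve, [Fn NegSym [Var a]])"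
  shows "admin_successor (Solving (q # Qs))
    (map (lsubst \<theta>) ([Neg (Solve, [Var a])] @ map solve_lit Qs))"
proof -
  have e: "tsubst \<theta> (enc_body q) = Fn NegSym [\<theta> a]"
    using is_mgu_unifier[OF mgu] by (simp add: unifier_Pair)
  then obtain A where q: "q = [Neg A]"
    by (rule tsubst_enc_body_NegSym)
  define \<sigma> where "\<sigma> = (Var(a := enc_atom A) :: 'a msym subst)"
  have "tsubst \<sigma> (enc_atom A) = enc_atom A"
    by (rule tsubst_id) (use fresh in \<open>auto simp: \<sigma>_def q\<close>)
  then have "unifier \<sigma> (Solve, [enc_body q]) (Solve, [Fn NegSym [Var a]])"
    by (simp add: unifier_Pair \<sigma>_def q)
  then obtain f where f: "inj_on f (- {a})" and \<theta>: "\<And>x. x \<in> - {a} \<Longrightarrow> \<theta> x = Var (f x)"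
    by (rule mgu_renames_fixed_vars[OF mgu, where D = "- {a}"]) (auto simp: \<sigma>_def)
  have sub: "qvars (concat (q # Qs)) \<subseteq> - {a}"
    using fresh by auto
  then have \<theta>': "\<theta> x = Var (f x)" if "x \<in> qvars (concat (q # Qs))" for x
    using \<theta>[of x] that sub by auto
  define F' where "F' = Negating (asubst (var_ren f) A) (map (qrename f) Qs)"
  show ?thesis
  proof (rule admin_successorI[of F' _ _ f])
    have "\<theta> a = tsubst \<theta> (enc_atom A)"
      using e by (simp add: q)
    also have "\<dots> = enc_atom (asubst (var_ren f) A)"
      by (rule enc_atom_subst) (auto simp: q intro!: \<theta>')
    finally have "\<theta> a = enc_atom (asubst (var_ren f) A)" .
    moreover have "map (lsubst \<theta>) (map solve_lit Qs) = map solve_lit (map (qrename f) Qs)"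
      by (rule map_solve_lit_subst) (auto intro!: \<theta>')
    ultimately show "map (lsubst \<theta>) ([Neg (Solve, [Var a])] @ map solve_lit Qs) = meta_query F'"
      by (simp add: F'_def asubst_Pair)
    show "inj_on f (qvars (object_query (Solving (q # Qs))))"
      using f sub by (auto intro: inj_on_subset)
  qed (simp_all add: F'_def q map_concat)
qed

lemma admin_step_clause:
  assumes hb: "h \<noteq> b" and fresh: "h \<notin> qvars (concat (q # Qs))" "b \<notin> qvars (concat (q # Qs))"
    and mgu: "is_mgu \<theta> (Solve, [enc_body q]) (Solve, [Var h])"
  shows "admin_successor (Solving (q # Qs))
    (map (lsubst \<theta>) ([Pos (ClauseSym, [Var h, Var b]), Pos (Solve, [Var b])] @ map solve_lit Qs))"
proof -
  have e: "\<theta> h = tsubst \<theta> (enc_body q)"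
    using is_mgu_unifier[OF mgu] by (simp add: unifier_Pair)
  define \<sigma> where "\<sigma> = (Var(h := enc_body q) :: 'a msym subst)"
  have "tsubst \<sigma> (enc_body q) = enc_body q"
    by (rule tsubst_id) (use fresh in \<open>auto simp: \<sigma>_def\<close>)
  then have "unifier \<sigma> (Solve, [enc_body q]) (Solve, [Var h])"
    by (simp add: unifier_Pair \<sigma>_def)
  then obtain f where f: "inj_on f (- {h})" and \<theta>: "\<And>x. x \<in> - {h} \<Longrightarrow> \<theta> x = Var (f x)"
    by (rule mgu_renames_fixed_vars[OF mgu, where D = "- {h}"]) (auto simp: \<sigma>_def)
  have sub: "qvars (concat (q # Qs)) \<subseteq> - {h}"
    using fresh by auto
  then have \<theta>': "\<theta> x = Var (f x)" if "x \<in> qvars (concat (q # Qs))" for x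
    using \<theta>[of x] that sub by auto
  have M': "map (lsubst \<theta>) ([Pos (ClauseSym, [Var h, Var b]), Pos (Solve, [Var b])] @ map solve_lit Qs)
      = Pos (ClauseSym, [\<theta> h, Var (f b)]) # Pos (Solve, [Var (f b)]) # map solve_lit (map (qrename f) Qs)"
    using \<theta>[of b] hb map_solve_lit_subst[of Qs \<theta> "var_ren f"] \<theta>' by (simp add: asubst_Pair)
  show ?thesis
  proof (cases q rule: enc_body_cases_Usr)
    case (1 A)
    define F' where "F' = Calling (asubst (var_ren f) A) (f b) (map (qrename f) Qs)"
    show ?thesis
    proof (rule admin_successorI[of F' _ _ f])
      have "f b \<notin> f ` (avars A \<union> qvars (concat Qs))"
        using f fresh hb sub by (auto simp: 1 inj_on_def)
      then show "wf_goal F'"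
        by (auto simp: F'_def avars_asubst qvars_concat_map)
      have "\<theta> h = enc_atom (asubst (var_ren f) A)"
        unfolding e 1 by (simp, rule enc_atom_subst) (auto simp: 1 intro!: \<theta>')
      with M' show "map (lsubst \<theta>) ([Pos (ClauseSym, [Var h, Var b]), Pos (Solve, [Var b])] @
          map solve_lit Qs) = meta_query F'"
        by (simp add: F'_def)
      show "inj_on f (qvars (object_query (Solving (q # Qs))))"
        using f sub by (auto intro: inj_on_subset)
    qed (simp_all add: F'_def 1 map_concat)
  next
    case (2 s ts)
    with M' e have "stuck (map (lsubst \<theta>) ([Pos (ClauseSym, [Var h, Var b]), Pos (Solve, [Var b])] @
        map solve_lit Qs))"
      unfolding stuck_def by simp
    then show ?thesis by (simp add: admin_successor_def)
  qed
qed

lemma Solving_resolvent_admin_successor: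
  assumes "ld_resolvent (meta_program P) (meta_query (Solving (q # Qs))) M'"
  shows "admin_successor (Solving (q # Qs)) M'"
proof -
  obtain c r \<theta> where c: "c \<in> M4" and r: "inj r"
    and apart: "cvars (csubst (var_ren r) c) \<inter> qvars (concat (q # Qs)) = {}"
    and mgu: "is_mgu \<theta> (Solve, [enc_body q]) (fst (csubst (var_ren r) c))"
    and M': "M' = map (lsubst \<theta>) (snd (csubst (var_ren r) c) @ map solve_lit Qs)"
    using Solving_resolvent_cases[OF assms] by blast
  have r01: "r 0 \<noteq> r 1" using r by (simp add: inj_eq)
  have ren: "csubst (var_ren r) ((Solve, ts), B) = ((Solve, map (tsubst (var_ren r)) ts), map (lsubst (var_ren r)) B)" for ts B
    by (simp add: csubst_def asubst_Pair)
  from c show ?thesis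
  proof (cases rule: M4_cases)
    case 1
    with mgu M' admin_step_true[of \<theta> q Qs] show ?thesis
      by (simp add: ren)
  next
    case 2
    from apart have "r 0 \<notin> qvars (concat (q # Qs))" "r 1 \<notin> qvars (concat (q # Qs))"
      by (auto simp: 2 ren cvars_def avars_Pair asubst_Pair var_ren_def)
    from admin_step_conj[OF r01 this] mgu M' show ?thesis
      by (simp add: 2 ren var_ren_def asubst_Pair)
  next
    case 3
    from apart have "r 0 \<notin> qvars (concat (q # Qs))"
      by (auto simp: 3 ren cvars_def avars_Pair asubst_Pair var_ren_def)
    from admin_step_neg[OF this] mgu M' show ?thesis
      by (simp add: 3 ren var_ren_def asubst_Pair)
  next
    case 4
    from apart have "r 0 \<notin> qvars (concat (q # Qs))" "r 1 \<notin> qvars (concat (q # Qs))"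
      by (auto simp: 4 ren cvars_def avars_Pair asubst_Pair var_ren_def)
    from admin_step_clause[OF r01 this] mgu M' show ?thesis
      by (simp add: 4 ren var_ren_def asubst_Pair)
  qed
qed

lemma M4_shift_resolvent:
  assumes c: "c \<in> M4" and N: "\<And>x. x \<in> qvars (concat (q # Qs)) \<Longrightarrow> x < N"
    and mgu: "is_mgu \<theta> (Solve, [enc_body q]) (fst (csubst (var_ren (\<lambda>x. x + N)) c))"
  shows "ld_resolvent (meta_program P) (meta_query (Solving (q # Qs)))
    (map (lsubst \<theta>) (snd (csubst (var_ren (\<lambda>x. x + N)) c) @ map solve_lit Qs))"
proof -
  have "cvars c \<subseteq> {0, 1}"
    using c by (auto simp: M4_def cvars_def avars_Pair)
  then have "cvars (csubst (var_ren (\<lambda>x. x + N)) c) \<subseteq> {N, Suc N}"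
    by (auto simp: cvars_csubst)
  moreover have "qvars (Pos (Solve, [enc_body q]) # map solve_lit Qs) = qvars (concat (q # Qs))"
    by (simp add: avars_Pair)
  moreover have "x \<notin> qvars (concat (q # Qs))" if "x \<in> {N, Suc N}" for x
  proof
    assume "x \<in> qvars (concat (q # Qs))"
    then have "x < N" by (rule N)
    with that show False by auto
  qed
  ultimately have "cvars (csubst (var_ren (\<lambda>x. x + N)) c) \<inter>
      qvars (Pos (Solve, [enc_body q]) # map solve_lit Qs) = {}"
    by blast
  moreover have "renaming (var_ren (\<lambda>x. x + N) :: 'a msym subst)"
    by (rule renaming_var_ren) (simp add: inj_def)
  ultimately show ?thesis
    using c mgu by (auto simp: solve_lit_def intro!: ld_resolventI)
qed

lemma ld_resolvent_Solving_Nil: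
  "ld_resolvent (meta_program P) (meta_query (Solving ([] # Qs))) (meta_query (Solving Qs))"
proof -
  obtain N where N: "\<And>x. x \<in> qvars (concat ([] # Qs)) \<Longrightarrow> x < N"
    using finite_qvars finite_nat_set_iff_bounded by metis
  let ?c = "((Solve, [Fn TrueSym []]), []) :: 'a msym clause"
  have "is_mgu Var (Solve, [enc_body []]) (fst (csubst (var_ren (\<lambda>x. x + N)) ?c))"
    by (rule is_mguI_idem) (simp_all add: csubst_def unifier_def asubst_Pair)
  moreover have "?c \<in> M4" by (simp add: M4_def)
  ultimately show ?thesis
    using M4_shift_resolvent[of ?c "[]" Qs N Var P] N by (simp add: csubst_def)
qed

lemma ld_resolvent_Solving_Neg:
  "ld_resolvent (meta_program P) (meta_query (Solving ([Neg A] # Qs))) (meta_query (Negating A Qs))"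
proof -
  obtain N where N: "\<And>x. x \<in> qvars (concat ([Neg A] # Qs)) \<Longrightarrow> x < N"
    using finite_qvars finite_nat_set_iff_bounded by metis
  let ?c = "((Solve, [Fn NegSym [Var 0]]), [Neg (Solve, [Var 0])]) :: 'a msym clause"
  define \<theta> where "\<theta> = (Var(N := enc_atom A) :: 'a msym subst)"
  have "\<theta> x = Var x" if "x < N" for x
    using that by (simp add: \<theta>_def)
  with N have fix_goal: "map (lsubst \<theta>) (map solve_lit Qs) = map solve_lit Qs"
    "tsubst \<theta> (enc_atom A) = enc_atom A"
    by (auto intro!: map_lsubst_id tsubst_id simp del: map_map)
  have "is_mgu \<theta> (Solve, [enc_body [Neg A]]) (fst (csubst (var_ren (\<lambda>x. x + N)) ?c))"
    using fix_goal(2)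
    by (intro is_mguI_idem) (auto simp: csubst_def asubst_Pair unifier_Pair var_ren_def \<theta>_def)
  moreover have "?c \<in> M4" by (simp add: M4_def)
  ultimately show ?thesis
    using M4_shift_resolvent[of ?c "[Neg A]" Qs N \<theta> P] N fix_goal
    by (simp add: csubst_def asubst_Pair var_ren_def \<theta>_def del: map_map)
qed

lemma ld_resolvent_Solving_Pos:
  obtains b where "wf_goal (Calling A b Qs)"
    and "ld_resolvent (meta_program P) (meta_query (Solving ([Pos A] # Qs)))
           (meta_query (Calling A b Qs))"
proof -
  obtain N where N: "\<And>x. x \<in> qvars (concat ([Pos A] # Qs)) \<Longrightarrow> x < N"
    using finite_qvars finite_nat_set_iff_bounded by metis
  let ?c = "((Solve, [Var 0]), [Pos (ClauseSym, [Var 0, Var 1]), Pos (Solve, [Var 1])])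
    :: 'a msym clause"
  define \<theta> where "\<theta> = (Var(N := enc_atom A) :: 'a msym subst)"
  have "\<theta> x = Var x" if "x < N" for x
    using that by (simp add: \<theta>_def)
  with N have fix_goal: "map (lsubst \<theta>) (map solve_lit Qs) = map solve_lit Qs"
    "tsubst \<theta> (enc_atom A) = enc_atom A"
    by (auto intro!: map_lsubst_id tsubst_id simp del: map_map)
  have "is_mgu \<theta> (Solve, [enc_body [Pos A]]) (fst (csubst (var_ren (\<lambda>x. x + N)) ?c))"
    using fix_goal(2)
    by (intro is_mguI_idem) (auto simp: csubst_def asubst_Pair unifier_Pair var_ren_def \<theta>_def)
  moreover have "?c \<in> M4" by (simp add: M4_def)
  ultimately have "ld_resolvent (meta_program P) (meta_query (Solving ([Pos A] # Qs)))
      (meta_query (Calling A (Suc N) Qs))"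
    using M4_shift_resolvent[of ?c "[Pos A]" Qs N \<theta> P] N fix_goal
    by (simp add: csubst_def asubst_Pair var_ren_def \<theta>_def del: map_map)
  moreover have "wf_goal (Calling A (Suc N) Qs)"
    using N[of "Suc N"] by auto
  ultimately show thesis using that by blast
qed

lemma ld_resolvent_Solving_Cons:
  "ld_resolvent (meta_program P) (meta_query (Solving ((L # L' # Ls) # Qs)))
     (meta_query (Solving ([L] # (L' # Ls) # Qs)))"
proof -
  obtain N where N: "\<And>x. x \<in> qvars (concat ((L # L' # Ls) # Qs)) \<Longrightarrow> x < N"
    using finite_qvars finite_nat_set_iff_bounded by metis
  let ?c = "((Solve, [Fn Comma [Var 0, Var 1]]), [Pos (Solve, [Var 0]), Pos (Solve, [Var 1])])
    :: 'a msym clause"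
  define \<theta> where "\<theta> = (Var(N := enc_lit L, Suc N := enc_body (L' # Ls)) :: 'a msym subst)"
  have "\<theta> x = Var x" if "x < N" for x
    using that by (simp add: \<theta>_def)
  with N have fix_goal: "map (lsubst \<theta>) (map solve_lit Qs) = map solve_lit Qs"
    "tsubst \<theta> (enc_body (L # L' # Ls)) = enc_body (L # L' # Ls)"
    by (auto intro!: map_lsubst_id tsubst_id simp del: map_map enc_body.simps)
  have "is_mgu \<theta> (Solve, [enc_body (L # L' # Ls)]) (fst (csubst (var_ren (\<lambda>x. x + N)) ?c))"
    using fix_goal(2)
    by (intro is_mguI_idem) (auto simp: csubst_def asubst_Pair unifier_Pair var_ren_def \<theta>_def)
  moreover have "?c \<in> M4" by (simp add: M4_def)
  ultimately show ?thesis
    using M4_shift_resolvent[of ?c "L # L' # Ls" Qs N \<theta> P] N fix_goal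
    by (simp add: csubst_def asubst_Pair var_ren_def \<theta>_def solve_lit_def del: map_map)
qed

lemma Solving_resolvent_exists:
  obtains F' where "ld_resolvent (meta_program P) (meta_query (Solving (q # Qs))) (meta_query F')"
    and "wf_goal F'" and "admin_measure F' < admin_measure (Solving (q # Qs))"
    and "object_query F' = object_query (Solving (q # Qs))"
proof (cases q rule: enc_body.cases)
  case 1
  show thesis
    using that[of "Solving Qs"] ld_resolvent_Solving_Nil[of P Qs] by (simp add: 1)
next
  case (2 L)
  show thesis
  proof (cases L)
    case (Pos A)
    obtain b where "wf_goal (Calling A b Qs)"
      and "ld_resolvent (meta_program P) (meta_query (Solving ([Pos A] # Qs))) (meta_query (Calling A b Qs))"
      by (rule ld_resolvent_Solving_Pos)
    then show thesis
      using that[of "Calling A b Qs"] by (simp add: 2 Pos)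
  next
    case (Neg A)
    show thesis
      using that[of "Negating A Qs"] ld_resolvent_Solving_Neg[of P A Qs] by (simp add: 2 Neg)
  qed
next
  case (3 L L' Ls)
  show thesis
    using that[of "Solving ([L] # (L' # Ls) # Qs)"] ld_resolvent_Solving_Cons[of P L L' Ls Qs]
    by (simp add: 3)
qed

section \<open>Clause steps\<close>

lemma Calling_resolvent_cases:
  assumes "ld_resolvent (meta_program P) (meta_query (Calling A b Qs)) M'"
  obtains c r \<theta> where "c \<in> P" and "inj r"
    and "cvars (csubst (var_ren r) c) \<inter> (avars A \<union> {b} \<union> qvars (concat Qs)) = {}"
    and "is_mgu \<theta> (ClauseSym, [enc_atom A, Var b])
      (ClauseSym, [enc_atom (fst (csubst (var_ren r) c)), enc_body (snd (csubst (var_ren r) c))])"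
    and "M' = map (lsubst \<theta>) (Pos (Solve, [Var b]) # map solve_lit Qs)"
proof -
  let ?M = "Pos (ClauseSym, [enc_atom A, Var b]) # Pos (Solve, [Var b]) # map solve_lit Qs"
  from assms obtain c \<rho> \<theta> where c: "c \<in> meta_program P" and r: "renaming \<rho>"
    and apart: "cvars (csubst \<rho> c) \<inter> qvars ?M = {}"
    and mgu: "is_mgu \<theta> (ClauseSym, [enc_atom A, Var b]) (fst (csubst \<rho> c))"
    and M': "M' = map (lsubst \<theta>) (snd (csubst \<rho> c) @ Pos (Solve, [Var b]) # map solve_lit Qs)"
    unfolding ld_resolvent_def meta_query.simps by blast
  obtain r where "inj r" and \<rho>: "\<rho> = var_ren r"
    using r by (auto simp: renaming_iff_var_ren)
  have "c \<notin> M4"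
    using unifier_fst[OF is_mgu_unifier[OF mgu]] by (auto simp: M4_def csubst_def)
  then obtain c0 where "c0 \<in> P" and "c = clause_fact c0"
    using c by (auto simp: ce_eq_image_clause_fact)
  moreover have "qvars ?M = avars A \<union> {b} \<union> qvars (concat Qs)"
    by (auto simp: avars_Pair)
  ultimately show thesis
    using that \<open>inj r\<close> apart mgu M'
    by (simp add: \<rho> csubst_clause_fact) (simp add: clause_fact_def)
qed

text \<open>Shifting all variables up frees \<open>Var 0\<close> to stand for \<open>\<sigma> b\<close>, where \<open>\<theta>\<close> need not be
  most general.\<close>

lemma is_mgu_shift_apart:
  assumes unif: "unifier \<theta> a c" and b: "b \<notin> avars a" "b \<notin> avars c"
    and general: "\<And>\<sigma>. unifier \<sigma> a c \<Longrightarrow> \<exists>\<delta>. \<forall>x. x \<noteq> b \<longrightarrow> \<sigma> x = tsubst \<delta> (\<theta> x)"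
  shows "is_mgu (\<lambda>x. if x = b then Var 0 else tsubst (var_ren Suc) (\<theta> x)) a c"
    (is "is_mgu ?\<theta> a c")
  unfolding is_mgu_def
proof (intro conjI allI impI)
  have "asubst ?\<theta> d = asubst (var_ren Suc) (asubst \<theta> d)" if "b \<notin> avars d" for d
    using that by (auto simp: asubst_asubst intro!: asubst_cong)
  with unif b show "unifier ?\<theta> a c"
    by (simp add: unifier_def)
next
  fix \<sigma> assume "unifier \<sigma> a c"
  then obtain \<delta> where \<delta>: "\<And>x. x \<noteq> b \<Longrightarrow> \<sigma> x = tsubst \<delta> (\<theta> x)"
    using general by blast
  define \<delta>' where "\<delta>' n = (case n of 0 \<Rightarrow> \<sigma> b | Suc k \<Rightarrow> \<delta> k)" for n
  have "(\<lambda>y. tsubst \<delta>' (var_ren Suc y)) = \<delta>"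
    by (simp add: \<delta>'_def)
  then have "\<sigma> x = tsubst \<delta>' (?\<theta> x)" for x
    using \<delta>[of x] by (cases "x = b") (simp_all add: \<delta>'_def tsubst_tsubst)
  then show "\<exists>\<delta>. \<forall>x. \<sigma> x = tsubst \<delta> (?\<theta> x)" by blast
qed

lemma mgu_clause_decode:
  assumes mgu: "is_mgu \<theta> (ClauseSym, [enc_atom A, Var b]) (ClauseSym, [enc_atom H, enc_body B])"
    and bA: "b \<notin> avars A" and bH: "b \<notin> avars H" and bB: "b \<notin> qvars B"
  defines "\<theta>o \<equiv> \<lambda>x. decode (\<theta> x)"
  shows "\<And>x. x \<noteq> b \<Longrightarrow> \<theta> x = map_trm Usr (\<theta>o x)"
    and "\<theta> b = enc_body (map (lsubst \<theta>o) B)"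
    and "unifier \<theta>o A H"
    and "\<And>\<sigma>. unifier \<sigma> A H \<Longrightarrow> \<exists>\<delta>. \<forall>x. x \<noteq> b \<longrightarrow> \<sigma> x = tsubst \<delta> (\<theta>o x)"
proof -
  have u1: "tsubst \<theta> (enc_atom A) = tsubst \<theta> (enc_atom H)"
    and u2: "\<theta> b = tsubst \<theta> (enc_body B)"
    using is_mgu_unifier[OF mgu] by (simp_all add: unifier_Pair)
  have decode_atom: "decode (tsubst \<theta> (enc_atom X)) = atom_trm (asubst \<theta>o X)" for X
    by (simp add: enc_atom_eq decode_tsubst tsubst_atom_trm \<theta>o_def)
  show AH: "unifier \<theta>o A H"
    using decode_atom[of A] decode_atom[of H] u1 by (simp add: unifier_def atom_trm_inject)
  have factor: "\<exists>\<delta>. \<forall>x. (if x = b then enc_body (map (lsubst \<sigma>) B) else map_trm Usr (\<sigma> x))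
      = tsubst \<delta> (\<theta> x)" if "unifier \<sigma> A H" for \<sigma>
  proof -
    let ?\<sigma> = "\<lambda>x. if x = b then enc_body (map (lsubst \<sigma>) B) else map_trm Usr (\<sigma> x)"
    have enc: "tsubst ?\<sigma> (enc_atom X) = enc_atom (asubst \<sigma> X)" if "b \<notin> avars X" for X
      by (rule enc_atom_subst) (use that in auto)
    have "tsubst ?\<sigma> (enc_body B) = enc_body (map (lsubst \<sigma>) B)"
      by (rule enc_body_subst) (use bB in auto)
    moreover have "asubst \<sigma> A = asubst \<sigma> H"
      using that by (simp add: unifier_def)
    ultimately have "unifier ?\<sigma> (ClauseSym, [enc_atom A, Var b]) (ClauseSym, [enc_atom H, enc_body B])"
      by (simp add: unifier_Pair enc[OF bA] enc[OF bH])
    then show ?thesis using mgu unfolding is_mgu_def by blast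
  qed
  show Usr_image: "\<theta> x = map_trm Usr (\<theta>o x)" if xb: "x \<noteq> b" for x
  proof -
    from factor[OF AH] obtain \<delta> where "\<forall>y. (if y = b then enc_body (map (lsubst \<theta>o) B)
        else map_trm Usr (\<theta>o y)) = tsubst \<delta> (\<theta> y)" by blast
    from this[rule_format, of x] xb have "tsubst \<delta> (\<theta> x) = map_trm Usr (\<theta>o x)"
      by simp
    then show ?thesis
      unfolding \<theta>o_def by (rule map_trm_Usr_decode_if_instance)
  qed
  show "\<theta> b = enc_body (map (lsubst \<theta>o) B)"
    unfolding u2 by (rule enc_body_subst) (use Usr_image bB in force)
  show "\<exists>\<delta>. \<forall>x. x \<noteq> b \<longrightarrow> \<sigma> x = tsubst \<delta> (\<theta>o x)" if "unifier \<sigma> A H" for \<sigma>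
  proof -
    from factor[OF that] obtain \<delta> where \<delta>: "\<forall>y. (if y = b then enc_body (map (lsubst \<sigma>) B)
        else map_trm Usr (\<sigma> y)) = tsubst \<delta> (\<theta> y)" by blast
    have "\<sigma> x = tsubst (\<lambda>k. decode (\<delta> k)) (\<theta>o x)" if xb: "x \<noteq> b" for x
    proof -
      have "\<sigma> x = decode (map_trm Usr (\<sigma> x))" by simp
      also have "\<dots> = decode (tsubst \<delta> (map_trm Usr (\<theta>o x)))"
        using \<delta>[rule_format, of x] Usr_image[OF xb] xb by simp
      finally show ?thesis by (simp add: decode_tsubst)
    qed
    then show ?thesis by blast
  qed
qed

text \<open>The object-level mgu is \<open>\<theta>\<close> decoded and shifted apart from \<open>b\<close>, so the two
  resolvents agree only up to that shift.\<close>

lemma Calling_resolvent_object_step: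
  assumes wf: "wf_goal (Calling A b Qs)"
    and res: "ld_resolvent (meta_program P) (meta_query (Calling A b Qs)) M'"
  obtains F' O' where "wf_goal F'" and "M' = meta_query F'"
    and "ld_resolvent P (Pos A # concat Qs) O'" and "variant (object_query F') O'"
proof -
  obtain c r \<theta> where c: "c \<in> P" and r: "inj r"
    and apart: "cvars (csubst (var_ren r) c) \<inter> (avars A \<union> {b} \<union> qvars (concat Qs)) = {}"
    and mgu: "is_mgu \<theta> (ClauseSym, [enc_atom A, Var b])
      (ClauseSym, [enc_atom (fst (csubst (var_ren r) c)), enc_body (snd (csubst (var_ren r) c))])"
    and M': "M' = map (lsubst \<theta>) (Pos (Solve, [Var b]) # map solve_lit Qs)"
    using Calling_resolvent_cases[OF res] by blast
  define H B where "H = fst (csubst (var_ren r) c)" and "B = snd (csubst (var_ren r) c)"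
  have bA: "b \<notin> avars A" and bQ: "b \<notin> qvars (concat Qs)"
    using wf by auto
  have bH: "b \<notin> avars H" and bB: "b \<notin> qvars B"
    using apart by (auto simp: H_def B_def cvars_def)
  define \<theta>o where "\<theta>o x = decode (\<theta> x)" for x
  note decoded = mgu_clause_decode[OF mgu[folded H_def B_def] bA bH bB, folded \<theta>o_def]
  define F' where "F' = Solving (map (lsubst \<theta>o) B # map (map (lsubst \<theta>o)) Qs)"
  have "map (lsubst \<theta>) (map solve_lit Qs) = map solve_lit (map (map (lsubst \<theta>o)) Qs)"
    by (rule map_solve_lit_subst) (use decoded(1) bQ in force)
  then have "M' = meta_query F'"
    using decoded(2) by (simp add: M' F'_def solve_lit_def asubst_Pair del: map_map)
  define \<theta>s where "\<theta>s x = (if x = b then Var 0 else tsubst (var_ren Suc) (\<theta>o x))" for x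
  have "is_mgu \<theta>s A H"
    unfolding \<theta>s_def[abs_def] using decoded(3) bA bH decoded(4) by (rule is_mgu_shift_apart)
  then have resolvent: "ld_resolvent P (Pos A # concat Qs) (map (lsubst \<theta>s) (B @ concat Qs))"
    using apart by (intro ld_resolventI[OF c renaming_var_ren[OF r]]) (auto simp: H_def B_def)
  have shift: "map (lsubst \<theta>s) (B @ concat Qs) = qrename Suc (object_query F')"
  proof -
    have "map (lsubst \<theta>s) (B @ concat Qs) = map (lsubst (\<lambda>x. tsubst (var_ren Suc) (\<theta>o x))) (B @ concat Qs)"
      by (rule map_lsubst_cong) (use bB bQ in \<open>auto simp: \<theta>s_def\<close>)
    also have "\<dots> = qrename Suc (map (lsubst \<theta>o) (B @ concat Qs))"
      by (simp only: map_lsubst_map_lsubst)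
    also have "map (lsubst \<theta>o) (B @ concat Qs) = object_query F'"
      by (simp add: F'_def map_concat)
    finally show ?thesis .
  qed
  have "variant (object_query F') (qrename Suc (object_query F'))"
    by (rule variant_qrename) simp
  moreover have "wf_goal F'"
    by (simp add: F'_def)
  ultimately show thesis
    using that \<open>M' = meta_query F'\<close> resolvent unfolding shift by blast
qed

lemma mgu_clause_encode:
  assumes mgu: "is_mgu \<theta>o A H"
    and bA: "b \<notin> avars A" and bH: "b \<notin> avars H" and bB: "b \<notin> qvars B"
  defines "\<theta> \<equiv> \<lambda>x. if x = b then enc_body (map (lsubst \<theta>o) B) else map_trm Usr (\<theta>o x)"
  shows "is_mgu \<theta> (ClauseSym, [enc_atom A, Var b]) (ClauseSym, [enc_atom H, enc_body B])"
  unfolding is_mgu_def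
proof (intro conjI allI impI)
  have enc: "tsubst \<theta> (enc_atom X) = enc_atom (asubst \<theta>o X)" if "b \<notin> avars X" for X
    by (rule enc_atom_subst) (use that in \<open>auto simp: \<theta>_def\<close>)
  have "tsubst \<theta> (enc_body B) = enc_body (map (lsubst \<theta>o) B)"
    by (rule enc_body_subst) (use bB in \<open>auto simp: \<theta>_def\<close>)
  moreover have "asubst \<theta>o A = asubst \<theta>o H"
    using is_mgu_unifier[OF mgu] by (simp add: unifier_def)
  moreover have "\<theta> b = enc_body (map (lsubst \<theta>o) B)"
    by (simp add: \<theta>_def)
  ultimately show "unifier \<theta> (ClauseSym, [enc_atom A, Var b]) (ClauseSym, [enc_atom H, enc_body B])"
    by (simp add: unifier_Pair enc[OF bA] enc[OF bH])
next
  fix \<sigma>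
  assume "unifier \<sigma> (ClauseSym, [enc_atom A, Var b]) (ClauseSym, [enc_atom H, enc_body B])"
  then have uA: "tsubst \<sigma> (enc_atom A) = tsubst \<sigma> (enc_atom H)" and ub: "\<sigma> b = tsubst \<sigma> (enc_body B)"
    by (simp_all add: unifier_Pair)
  obtain \<delta> where \<delta>: "\<And>x. \<sigma> x = tsubst \<delta> (map_trm Usr (\<theta>o x))"
    using mgu_factors_meta_unifier[OF mgu uA] by blast
  have "\<sigma> b = tsubst \<delta> (tsubst (\<lambda>x. map_trm Usr (\<theta>o x)) (enc_body B))"
    unfolding ub tsubst_tsubst by (simp add: \<delta>[abs_def])
  also have "\<dots> = tsubst \<delta> (enc_body (map (lsubst \<theta>o) B))"
    by (subst enc_body_subst[where \<sigma> = \<theta>o]) simp_all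
  finally have "\<sigma> b = tsubst \<delta> (enc_body (map (lsubst \<theta>o) B))" .
  then have "\<sigma> x = tsubst \<delta> (\<theta> x)" for x
    using \<delta>[of x] by (cases "x = b") (simp_all add: \<theta>_def)
  then show "\<exists>\<delta>. \<forall>x. \<sigma> x = tsubst \<delta> (\<theta> x)" by blast
qed

lemma ld_resolvent_Calling:
  assumes wf: "wf_goal (Calling A b Qs)" and res: "ld_resolvent P (Pos A # concat Qs) O'"
  obtains F' where "ld_resolvent (meta_program P) (meta_query (Calling A b Qs)) (meta_query F')"
    and "wf_goal F'" and "object_query F' = O'"
proof -
  obtain c \<rho> \<theta>o where c: "c \<in> P" and r: "renaming \<rho>"
    and apart: "cvars (csubst \<rho> c) \<inter> (qvars (Pos A # concat Qs) \<union> {b}) = {}"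
    and mgu: "is_mgu \<theta>o A (fst (csubst \<rho> c))"
    and O': "O' = map (lsubst \<theta>o) (snd (csubst \<rho> c) @ concat Qs)"
    by (rule ld_resolvent_fresh[OF res, of "{b}"]) auto
  obtain r where r: "inj r" and \<rho>: "\<rho> = var_ren r"
    using r by (auto simp: renaming_iff_var_ren)
  define H B where "H = fst (csubst \<rho> c)" and "B = snd (csubst \<rho> c)"
  have bA: "b \<notin> avars A" and bQ: "b \<notin> qvars (concat Qs)"
    using wf by auto
  have bH: "b \<notin> avars H" and bB: "b \<notin> qvars B"
    using apart by (auto simp: H_def B_def cvars_def)
  define \<theta> where "\<theta> x = (if x = b then enc_body (map (lsubst \<theta>o) B) else map_trm Usr (\<theta>o x))" for x
  have "is_mgu \<theta> (ClauseSym, [enc_atom A, Var b]) (ClauseSym, [enc_atom H, enc_body B])"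
    unfolding \<theta>_def[abs_def] using mgu[folded H_def] bA bH bB by (rule mgu_clause_encode)
  then have mgu': "is_mgu \<theta> (ClauseSym, [enc_atom A, Var b]) (fst (csubst (var_ren r) (clause_fact c)))"
    unfolding csubst_clause_fact by (simp add: clause_fact_def \<rho> H_def B_def)
  have fact: "clause_fact c \<in> meta_program P"
    using c by (simp add: ce_eq_image_clause_fact)
  have disjoint: "cvars (csubst (var_ren r) (clause_fact c)) \<inter>
      qvars (Pos (ClauseSym, [enc_atom A, Var b]) # Pos (Solve, [Var b]) # map solve_lit Qs) = {}"
    using apart by (auto simp: \<rho> csubst_clause_fact avars_Pair)
  define F' where "F' = Solving (map (lsubst \<theta>o) B # map (map (lsubst \<theta>o)) Qs)"
  have "map (lsubst \<theta>) (map solve_lit Qs) = map solve_lit (map (map (lsubst \<theta>o)) Qs)"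
    by (rule map_solve_lit_subst) (use bQ in \<open>auto simp: \<theta>_def\<close>)
  moreover have "snd (csubst (var_ren r) (clause_fact c)) = []"
    unfolding csubst_clause_fact by (simp add: clause_fact_def)
  ultimately have "meta_query F' = map (lsubst \<theta>) (snd (csubst (var_ren r) (clause_fact c)) @
      Pos (Solve, [Var b]) # map solve_lit Qs)"
    by (simp add: F'_def solve_lit_def asubst_Pair \<theta>_def del: map_map)
  then have "ld_resolvent (meta_program P) (meta_query (Calling A b Qs)) (meta_query F')"
    unfolding meta_query.simps by (rule ld_resolventI[OF fact renaming_var_ren[OF r] disjoint mgu'])
  moreover have "object_query F' = O'"
    by (simp add: F'_def O' B_def map_concat)
  ultimately show thesis
    using that[of F'] by (simp add: F'_def)
qed

section \<open>Simulation\<close>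

definition represents :: "'f meta_goal \<Rightarrow> 'f query \<Rightarrow> bool" where
  "represents F Q \<longleftrightarrow> wf_goal F \<and> variant (object_query F) Q"

lemma represents_refl: "wf_goal F \<Longrightarrow> represents F (object_query F)"
  by (simp add: represents_def variant_refl)

lemma represents_admin_induct_ex:
  assumes step: "\<And>A R M'. ld_resolvent (meta_program P) (Pos A # R) M' \<Longrightarrow> \<Phi> M' \<Longrightarrow> \<Phi> (Pos A # R)"
    and base: "\<And>F. represents F Q \<Longrightarrow> \<not> administrative F \<Longrightarrow> \<Phi> (meta_query F)"
  shows "represents F Q \<Longrightarrow> \<Phi> (meta_query F)"
proof (induction "admin_measure F" arbitrary: F rule: less_induct)
  case less
  show ?case
  proof (cases "administrative F")
    case True
    then obtain q Qs where F: "F = Solving (q # Qs)"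
      by (auto simp: administrative_def)
    obtain F' where res: "ld_resolvent (meta_program P) (meta_query F) (meta_query F')"
      and "wf_goal F'" and "admin_measure F' < admin_measure F" and "object_query F' = object_query F"
      unfolding F by (rule Solving_resolvent_exists)
    with less have "\<Phi> (meta_query F')"
      by (simp add: represents_def)
    with res show ?thesis
      by (simp add: F solve_lit_def step)
  qed (use less base in blast)
qed

lemma represents_admin_induct_all:
  assumes step: "\<And>A R. (\<And>M'. ld_resolvent (meta_program P) (Pos A # R) M' \<Longrightarrow> \<Phi> M') \<Longrightarrow> \<Phi> (Pos A # R)"
    and base: "\<And>F. represents F Q \<Longrightarrow> \<not> administrative F \<Longrightarrow> \<Phi> (meta_query F)"
  shows "represents F Q \<Longrightarrow> \<Phi> (meta_query F)"
proof (induction "admin_measure F" arbitrary: F rule: less_induct)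
  case less
  show ?case
  proof (cases "administrative F")
    case True
    then obtain q Qs where F: "F = Solving (q # Qs)"
      by (auto simp: administrative_def)
    have "\<Phi> M'" if "ld_resolvent (meta_program P) (meta_query F) M'" for M'
      using Solving_resolvent_admin_successor[OF that[unfolded F]]
      unfolding admin_successor_def
    proof
      assume "stuck M'"
      then show "\<Phi> M'"
        using stuck_no_ld_resolvent[of M' P] by (auto simp: stuck_def intro: step)
    next
      assume "\<exists>F'. wf_goal F' \<and> M' = meta_query F' \<and> admin_measure F' < admin_measure (Solving (q # Qs))
        \<and> variant (object_query (Solving (q # Qs))) (object_query F')"
      then obtain F' where "wf_goal F'" and M': "M' = meta_query F'"
        and "admin_measure F' < admin_measure F"
        and v: "variant (object_query F) (object_query F')"
        unfolding F by blast
      moreover have "variant (object_query F') Q"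
        using variant_trans[OF variant_sym[OF v]] less.prems by (simp add: represents_def)
      ultimately show "\<Phi> M'"
        using less.hyps by (simp add: represents_def)
    qed
    then show ?thesis
      by (simp add: F solve_lit_def step)
  qed (use less base in blast)
qed

lemma represents_Nil: "represents F [] \<Longrightarrow> \<not> administrative F \<Longrightarrow> F = Solving []"
  by (cases F) (auto simp: represents_def variant_Nil_iff)

lemma represents_Pos:
  assumes "represents F (Pos A # R)" and "\<not> administrative F"
  obtains A' b Qs where "F = Calling A' b Qs"
  using assms
  by (cases F) (auto simp: represents_def variant_Nil_left_iff
      dest!: variant_Cons_Cons)

lemma represents_Neg:
  assumes "represents F (Neg A # R)" and "\<not> administrative F"
  obtains A' Qs where "F = Negating A' Qs" and "variant (concat Qs) R"
    and "ground_atom A' \<longleftrightarrow> ground_atom A" and "ground_atom A \<Longrightarrow> A' = A"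
proof -
  obtain A' Qs where F: "F = Negating A' Qs"
    using assms by (cases F) (auto simp: represents_def variant_Nil_left_iff
        dest!: variant_Cons_Cons)
  with assms(1) obtain \<pi> where "variant (concat Qs) R" and A: "A = asubst (var_ren \<pi>) A'"
    by (auto simp: represents_def dest!: variant_Cons_Cons)
  moreover from A have "ground_atom A' \<longleftrightarrow> ground_atom A"
    by (simp add: ground_asubst_var_ren_iff)
  moreover from A have "ground_atom A \<Longrightarrow> A' = A"
    using ground_asubst by (metis ground_asubst_var_ren_iff)
  ultimately show thesis using that F by blast
qed

lemma represents_Solving_single: "represents (Solving [[Pos A]]) [Pos A]"
  by (simp add: represents_def variant_refl)

lemma represents_Solving: "variant (concat Qs) R \<Longrightarrow> represents (Solving Qs) R"
  by (simp add: represents_def)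

lemma represents_ldnf_succeeds:
  "(\<And>F. represents F Q \<Longrightarrow> \<not> administrative F \<Longrightarrow> ldnf_succeeds (meta_program P) (meta_query F)) \<Longrightarrow>
   represents F Q \<Longrightarrow> ldnf_succeeds (meta_program P) (meta_query F)"
  by (rule represents_admin_induct_ex[where \<Phi> = "ldnf_succeeds (meta_program P)"])
    (auto intro: ldnf_succeeds_ldnf_ffails.succ_pos)

lemma represents_ldnf_ffails:
  "(\<And>F. represents F Q \<Longrightarrow> \<not> administrative F \<Longrightarrow> ldnf_ffails (meta_program P) (meta_query F)) \<Longrightarrow>
   represents F Q \<Longrightarrow> ldnf_ffails (meta_program P) (meta_query F)"
  by (rule represents_admin_induct_all[where \<Phi> = "ldnf_ffails (meta_program P)"])
    (auto intro: ldnf_succeeds_ldnf_ffails.ff_pos)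

lemma represents_ldnf_terminates:
  "(\<And>F. represents F Q \<Longrightarrow> \<not> administrative F \<Longrightarrow> ldnf_terminates (meta_program P) (meta_query F)) \<Longrightarrow>
   represents F Q \<Longrightarrow> ldnf_terminates (meta_program P) (meta_query F)"
  by (rule represents_admin_induct_all[where \<Phi> = "ldnf_terminates (meta_program P)"])
    (auto intro: ldnf_terminates.term_pos)

lemma represents_Pos_resolvent:
  assumes F: "represents F (Pos A # R)" and na: "\<not> administrative F"
    and res: "ld_resolvent (meta_program P) (meta_query F) M'"
  obtains F' O' where "M' = meta_query F'" and "represents F' O'" and "ld_resolvent P (Pos A # R) O'"
proof -
  obtain A' b Qs where F_eq: "F = Calling A' b Qs"
    by (rule represents_Pos[OF F na])
  obtain F' O' where "wf_goal F'" and M': "M' = meta_query F'"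
    and res_obj: "ld_resolvent P (Pos A' # concat Qs) O'" and "variant (object_query F') O'"
    using Calling_resolvent_object_step res F F_eq by (metis represents_def)
  then have "represents F' O'"
    by (simp add: represents_def)
  moreover from F F_eq have "variant (Pos A # R) (Pos A' # concat Qs)"
    by (simp add: represents_def variant_sym)
  with res_obj have "ld_resolvent P (Pos A # R) O'"
    by (rule ld_resolvent_variant[rotated])
  ultimately show thesis
    using that M' by blast
qed

lemma represents_Pos_resolvent_exists:
  assumes F: "represents F (Pos A # R)" and na: "\<not> administrative F"
    and res: "ld_resolvent P (Pos A # R) O'"
  obtains F' where "ld_resolvent (meta_program P) (meta_query F) (meta_query F')"
    and "represents F' O'"
proof -
  obtain A' b Qs where F_eq: "F = Calling A' b Qs"
    by (rule represents_Pos[OF F na])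
  with F res have "ld_resolvent P (Pos A' # concat Qs) O'"
    using ld_resolvent_variant by (auto simp: represents_def)
  then obtain F' where "ld_resolvent (meta_program P) (meta_query F) (meta_query F')"
    and "wf_goal F'" and "object_query F' = O'"
    using ld_resolvent_Calling F F_eq by (metis represents_def)
  with that show thesis
    using represents_refl by blast
qed

lemma represents_Pos_meta_query:
  assumes "represents F (Pos A # R)" and "\<not> administrative F"
  obtains B R' where "meta_query F = Pos B # R'"
  using represents_Pos[OF assms] by (metis meta_query.simps(3))

lemma
  fixes P :: "'f clause set"
  shows object_to_meta_ldnf_succeeds:
      "ldnf_succeeds P Q \<Longrightarrow> \<forall>F. represents F Q \<longrightarrow> ldnf_succeeds (meta_program P) (meta_query F)"
    and object_to_meta_ldnf_ffails:
      "ldnf_ffails P Q \<Longrightarrow> \<forall>F. represents F Q \<longrightarrow> ldnf_ffails (meta_program P) (meta_query F)"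
proof (induction rule: ldnf_succeeds_ldnf_ffails.inducts)
  case succ_nil
  have "ldnf_succeeds (meta_program P) (meta_query F)"
    if "represents F []" and "\<not> administrative F" for F :: "'f meta_goal"
    using represents_Nil[OF that] by (simp add: ldnf_succeeds_ldnf_ffails.succ_nil)
  from represents_ldnf_succeeds[OF this] show ?case by blast
next
  case (succ_pos A R Q')
  have "ldnf_succeeds (meta_program P) (meta_query F)"
    if F: "represents F (Pos A # R)" and na: "\<not> administrative F" for F
  proof -
    obtain F' where "ld_resolvent (meta_program P) (meta_query F) (meta_query F')"
      and "represents F' Q'"
      by (rule represents_Pos_resolvent_exists[OF F na succ_pos(1)])
    moreover obtain B R' where "meta_query F = Pos B # R'"
      by (rule represents_Pos_meta_query[OF F na])
    ultimately show ?thesis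
      using succ_pos(3) by (metis ldnf_succeeds_ldnf_ffails.succ_pos)
  qed
  from represents_ldnf_succeeds[OF this] show ?case by blast
next
  case (succ_neg A R)
  have "ldnf_succeeds (meta_program P) (meta_query F)"
    if F: "represents F (Neg A # R)" and na: "\<not> administrative F" for F
  proof -
    obtain Qs where F_eq: "F = Negating A Qs" and v: "variant (concat Qs) R"
      using represents_Neg[OF F na] succ_neg(1) by metis
    from succ_neg(3)[rule_format, OF represents_Solving_single]
      succ_neg(5)[rule_format, OF represents_Solving[OF v]] succ_neg(1)
    show ?thesis
      by (simp add: F_eq ldnf_succeeds_ldnf_ffails.succ_neg)
  qed
  from represents_ldnf_succeeds[OF this] show ?case by blast
next
  case (ff_pos A R)
  have "ldnf_ffails (meta_program P) (meta_query F)"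
    if F: "represents F (Pos A # R)" and na: "\<not> administrative F" for F
  proof -
    obtain B R' where M: "meta_query F = Pos B # R'"
      by (rule represents_Pos_meta_query[OF F na])
    have "ldnf_ffails (meta_program P) M'" if "ld_resolvent (meta_program P) (meta_query F) M'" for M'
      using ff_pos by (metis represents_Pos_resolvent[OF F na that])
    with M show ?thesis
      by (simp add: ldnf_succeeds_ldnf_ffails.ff_pos)
  qed
  from represents_ldnf_ffails[OF this] show ?case by blast
next
  case (ff_neg_succ A R)
  have "ldnf_ffails (meta_program P) (meta_query F)"
    if F: "represents F (Neg A # R)" and na: "\<not> administrative F" for F
  proof -
    obtain Qs where F_eq: "F = Negating A Qs"
      using represents_Neg[OF F na] ff_neg_succ(1) by metis
    from ff_neg_succ(3)[rule_format, OF represents_Solving_single] ff_neg_succ(1)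
    show ?thesis
      by (simp add: F_eq ldnf_succeeds_ldnf_ffails.ff_neg_succ)
  qed
  from represents_ldnf_ffails[OF this] show ?case by blast
next
  case (ff_neg_ff A R)
  have "ldnf_ffails (meta_program P) (meta_query F)"
    if F: "represents F (Neg A # R)" and na: "\<not> administrative F" for F
  proof -
    obtain Qs where F_eq: "F = Negating A Qs" and v: "variant (concat Qs) R"
      using represents_Neg[OF F na] ff_neg_ff(1) by metis
    from ff_neg_ff(3)[rule_format, OF represents_Solving_single]
      ff_neg_ff(5)[rule_format, OF represents_Solving[OF v]] ff_neg_ff(1)
    show ?thesis
      by (simp add: F_eq ldnf_succeeds_ldnf_ffails.ff_neg_ff)
  qed
  from represents_ldnf_ffails[OF this] show ?case by blast
qed

lemma meta_resolvent_decodes: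
  assumes wf: "wf_goal F" and M: "meta_query F = Pos B # R"
    and res: "ld_resolvent (meta_program P) (Pos B # R) M'" and "\<not> stuck M'"
  obtains F' O' where "wf_goal F'" and "M' = meta_query F'" and "variant (object_query F') O'"
    and "O' = object_query F \<or> ld_resolvent P (object_query F) O'"
  using M
proof (cases rule: meta_query_Pos_cases)
  case 1
  then obtain q Qs where F: "F = Solving (q # Qs)"
    by (auto simp: administrative_def)
  from res M have "admin_successor F M'"
    unfolding F by (intro Solving_resolvent_admin_successor) simp
  with \<open>\<not> stuck M'\<close> show thesis
    unfolding admin_successor_def using that variant_sym by blast
next
  case (2 A b Qs)
  with res M wf show thesis
    using that Calling_resolvent_object_step by (metis object_query.simps(3))
qed

lemma meta_resolvents_cover:
  assumes wf: "wf_goal F" and M: "meta_query F = Pos B # R"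
  obtains F' where "ld_resolvent (meta_program P) (Pos B # R) (meta_query F')" and "wf_goal F'"
      and "object_query F' = object_query F"
    | A R' where "object_query F = Pos A # R'" and "\<And>O'. ld_resolvent P (Pos A # R') O' \<Longrightarrow>
        \<exists>F'. ld_resolvent (meta_program P) (Pos B # R) (meta_query F') \<and> wf_goal F' \<and> object_query F' = O'"
  using M
proof (cases rule: meta_query_Pos_cases)
  case 1
  then obtain q Qs where F: "F = Solving (q # Qs)"
    by (auto simp: administrative_def)
  show thesis
    by (rule Solving_resolvent_exists[of P q Qs]) (use that(1) M F in auto)
next
  case (2 A b Qs)
  show thesis
    by (rule that(2)[of A "concat Qs"]) (use ld_resolvent_Calling wf M 2 in \<open>simp_all, metis\<close>)
qed

lemma
  fixes P :: "'f clause set"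
  shows meta_to_object_ldnf_succeeds:
      "ldnf_succeeds (meta_program P) M \<Longrightarrow>
       \<forall>F. wf_goal F \<longrightarrow> M = meta_query F \<longrightarrow> ldnf_succeeds P (object_query F)"
    and meta_to_object_ldnf_ffails:
      "ldnf_ffails (meta_program P) M \<Longrightarrow>
       \<forall>F. wf_goal F \<longrightarrow> M = meta_query F \<longrightarrow> ldnf_ffails P (object_query F)"
proof (induction rule: ldnf_succeeds_ldnf_ffails.inducts)
  case succ_nil
  show ?case
    by (metis meta_query_Nil ldnf_succeeds_ldnf_ffails.succ_nil)
next
  case (succ_pos B R M')
  have "\<not> stuck M'"
    using stuck_not_ldnf_succeeds succ_pos(2) by blast
  have "ldnf_succeeds P (object_query F)" if wf: "wf_goal F" and M: "meta_query F = Pos B # R" for F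
  proof -
    obtain F' O' where "wf_goal F'" and "M' = meta_query F'" and "variant (object_query F') O'"
      and O': "O' = object_query F \<or> ld_resolvent P (object_query F) O'"
      by (rule meta_resolvent_decodes[OF wf M succ_pos(1) \<open>\<not> stuck M'\<close>])
    with succ_pos(3) have "ldnf_succeeds P O'"
      using ldnf_succeeds_variant by blast
    with O' show ?thesis
      by (metis ld_resolvent_Pos ldnf_succeeds_ldnf_ffails.succ_pos)
  qed
  then show ?case by metis
next
  case (succ_neg B R)
  have "ldnf_succeeds P (object_query F)" if "Neg B # R = meta_query F" for F
  proof -
    from that obtain A Qs where "F = Negating A Qs" and "B = (Solve, [enc_atom A])"
      and "R = meta_query (Solving Qs)"
      by (metis meta_query_Neg_cases)
    with succ_neg(3)[rule_format, of "Solving [[Pos A]]"] succ_neg(5)[rule_format, of "Solving Qs"]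
      succ_neg(1)
    show ?thesis
      by (simp add: ldnf_succeeds_ldnf_ffails.succ_neg)
  qed
  then show ?case by blast
next
  case (ff_pos B R)
  have "ldnf_ffails P (object_query F)" if wf: "wf_goal F" and M: "meta_query F = Pos B # R" for F
    using wf M
  proof (cases rule: meta_resolvents_cover[where P = P])
    case 1
    with ff_pos show ?thesis by metis
  next
    case (2 A R')
    have "ldnf_ffails P O'" if res: "ld_resolvent P (Pos A # R') O'" for O'
    proof -
      obtain F' where "ld_resolvent (meta_program P) (Pos B # R) (meta_query F')"
        and "wf_goal F'" and "object_query F' = O'"
        using 2(2)[OF res] by blast
      with ff_pos show ?thesis by blast
    qed
    with 2(1) show ?thesis
      by (simp add: ldnf_succeeds_ldnf_ffails.ff_pos)
  qed
  then show ?case by metis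
next
  case (ff_neg_succ B R)
  have "ldnf_ffails P (object_query F)" if "Neg B # R = meta_query F" for F
  proof -
    from that obtain A Qs where "F = Negating A Qs" and "B = (Solve, [enc_atom A])"
      by (metis meta_query_Neg_cases)
    with ff_neg_succ(3)[rule_format, of "Solving [[Pos A]]"] ff_neg_succ(1)
    show ?thesis
      by (simp add: ldnf_succeeds_ldnf_ffails.ff_neg_succ)
  qed
  then show ?case by blast
next
  case (ff_neg_ff B R)
  have "ldnf_ffails P (object_query F)" if "Neg B # R = meta_query F" for F
  proof -
    from that obtain A Qs where "F = Negating A Qs" and "B = (Solve, [enc_atom A])"
      and "R = meta_query (Solving Qs)"
      by (metis meta_query_Neg_cases)
    with ff_neg_ff(3)[rule_format, of "Solving [[Pos A]]"] ff_neg_ff(5)[rule_format, of "Solving Qs"]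
      ff_neg_ff(1)
    show ?thesis
      by (simp add: ldnf_succeeds_ldnf_ffails.ff_neg_ff)
  qed
  then show ?case by blast
qed

lemma meta_to_object_ldnf_terminates:
  fixes P :: "'f clause set"
  shows "ldnf_terminates (meta_program P) M \<Longrightarrow>
    \<forall>F. wf_goal F \<longrightarrow> M = meta_query F \<longrightarrow> ldnf_terminates P (object_query F)"
proof (induction rule: ldnf_terminates.induct)
  case term_nil
  show ?case
    by (metis meta_query_Nil ldnf_terminates.term_nil)
next
  case (term_pos B R)
  have "ldnf_terminates P (object_query F)" if wf: "wf_goal F" and M: "meta_query F = Pos B # R" for F
    using wf M
  proof (cases rule: meta_resolvents_cover[where P = P])
    case 1
    with term_pos show ?thesis by metis
  next
    case (2 A R')
    have "ldnf_terminates P O'" if res: "ld_resolvent P (Pos A # R') O'" for O'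
    proof -
      obtain F' where "ld_resolvent (meta_program P) (Pos B # R) (meta_query F')"
        and "wf_goal F'" and "object_query F' = O'"
        using 2(2)[OF res] by blast
      with term_pos show ?thesis by blast
    qed
    with 2(1) show ?thesis
      by (simp add: ldnf_terminates.term_pos)
  qed
  then show ?case by metis
next
  case (term_flounder B R)
  have "ldnf_terminates P (object_query F)" if "Neg B # R = meta_query F" for F
  proof -
    from that obtain A Qs where "F = Negating A Qs" and "B = (Solve, [enc_atom A])"
      by (metis meta_query_Neg_cases)
    with term_flounder show ?thesis
      by (simp add: ldnf_terminates.term_flounder)
  qed
  then show ?case by blast
next
  case (term_neg B R)
  have "ldnf_terminates P (object_query F)" if "Neg B # R = meta_query F" for F
  proof -
    from that obtain A Qs where F: "F = Negating A Qs" and B: "B = (Solve, [enc_atom A])"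
      and R: "R = meta_query (Solving Qs)"
      by (metis meta_query_Neg_cases)
    have "ldnf_terminates P (concat Qs)" if "ldnf_ffails P [Pos A]"
    proof -
      from object_to_meta_ldnf_ffails[OF that, rule_format, OF represents_Solving_single]
      have "ldnf_ffails (meta_program P) [Pos B]"
        by (simp add: B)
      with term_neg(4) R show ?thesis
        by (metis object_query.simps(1) wf_goal.simps(2))
    qed
    with term_neg(1) term_neg(3)[rule_format, of "Solving [[Pos A]]"]
    show ?thesis
      by (simp add: F B ldnf_terminates.term_neg)
  qed
  then show ?case by blast
qed

lemma object_to_meta_ldnf_terminates:
  fixes P :: "'f clause set"
  shows "ldnf_terminates P Q \<Longrightarrow>
    \<forall>F. represents F Q \<longrightarrow> ldnf_terminates (meta_program P) (meta_query F)"
proof (induction rule: ldnf_terminates.induct)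
  case term_nil
  have "ldnf_terminates (meta_program P) (meta_query F)"
    if "represents F []" and "\<not> administrative F" for F :: "'f meta_goal"
    using represents_Nil[OF that] by (simp add: ldnf_terminates.term_nil)
  from represents_ldnf_terminates[OF this] show ?case by blast
next
  case (term_pos A R)
  have "ldnf_terminates (meta_program P) (meta_query F)"
    if F: "represents F (Pos A # R)" and na: "\<not> administrative F" for F
  proof -
    obtain B R' where M: "meta_query F = Pos B # R'"
      by (rule represents_Pos_meta_query[OF F na])
    have "ldnf_terminates (meta_program P) M'"
      if "ld_resolvent (meta_program P) (meta_query F) M'" for M'
      using term_pos by (metis represents_Pos_resolvent[OF F na that])
    with M show ?thesis
      by (simp add: ldnf_terminates.term_pos)
  qed
  from represents_ldnf_terminates[OF this] show ?case by blast
next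
  case (term_flounder A R)
  have "ldnf_terminates (meta_program P) (meta_query F)"
    if F: "represents F (Neg A # R)" and na: "\<not> administrative F" for F
  proof -
    obtain A' Qs where "F = Negating A' Qs" and "\<not> ground_atom A'"
      using represents_Neg[OF F na] term_flounder by metis
    then show ?thesis
      by (simp add: ldnf_terminates.term_flounder)
  qed
  from represents_ldnf_terminates[OF this] show ?case by blast
next
  case (term_neg A R)
  have "ldnf_terminates (meta_program P) (meta_query F)"
    if F: "represents F (Neg A # R)" and na: "\<not> administrative F" for F
  proof -
    obtain Qs where F_eq: "F = Negating A Qs" and v: "variant (concat Qs) R"
      using represents_Neg[OF F na] term_neg(1) by metis
    have "ldnf_terminates (meta_program P) (meta_query (Solving Qs))"
      if "ldnf_ffails (meta_program P) [Pos (Solve, [enc_atom A])]"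
    proof -
      from meta_to_object_ldnf_ffails[OF that, rule_format, of "Solving [[Pos A]]"]
      have "ldnf_ffails P [Pos A]"
        by simp
      with term_neg(4) represents_Solving[OF v] show ?thesis
        by blast
    qed
    with term_neg(1) term_neg(3)[rule_format, OF represents_Solving_single]
    show ?thesis
      by (simp add: F_eq ldnf_terminates.term_neg)
  qed
  from represents_ldnf_terminates[OF this] show ?case by blast
qed

theorem mainTheorem13:
  fixes P :: "'f clause set" and S :: "'f query set"
  assumes "finite P"
  shows "ldnf_terminates_wrt P S \<longleftrightarrow>
         ldnf_terminates_wrt (M4 \<union> ce P) (solve_query ` S)"
proof -
  have "ldnf_terminates P Q \<longleftrightarrow> ldnf_terminates (M4 \<union> ce P) (solve_query Q)" for Q
  proof
    have solve_query: "solve_query Q = meta_query (Solving [Q])"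
      by (simp add: solve_query_def solve_lit_def)
    show "ldnf_terminates P Q \<Longrightarrow> ldnf_terminates (M4 \<union> ce P) (solve_query Q)"
      using object_to_meta_ldnf_terminates[rule_format, of P Q "Solving [Q]"] represents_refl[of "Solving [Q]"]
      by (simp add: solve_query)
    show "ldnf_terminates (M4 \<union> ce P) (solve_query Q) \<Longrightarrow> ldnf_terminates P Q"
      using meta_to_object_ldnf_terminates[rule_format, of P "solve_query Q" "Solving [Q]"]
      by (simp add: solve_query)
  qed
  then show ?thesis
    by (simp add: ldnf_terminates_wrt_def)
qed

end
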